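(* Consider an original formation of $n$ heterogeneous agents as described in the context, with given gains, whose closed loop is locally exponentially stable at the desired configuration $p^*$ (in relative coordinates). A new agent $n+1$ (either a distance agent or a bearing agent) is merged unilaterally by adding the edges $(n+1,1)$ and $(n+1,2)$, both controlled by agent $n+1$ (with terms of agent $n+1$'s type) with gains $k_\ell>0$ and $k_{\ell+1}>0$ respectively, with desired position $p^*_{n+1}$ such that $p^*_1,p^*_2,p^*_{n+1}$ are not collinear; the control laws of agents $1,\dots,n$ are unchanged. Then for any $k_\ell,k_{\ell+1}>0$ the resulting $(n+1)$-agent closed-loop system is locally exponentially stable at the extended desired configuration, i.e. $\zeta=(p_2-p_1,\dots,p_{n+1}-p_1)$ converges locally exponentially to $\zeta^*=(p^*_2-p^*_1,\dots,p^*_{n+1}-p^*_1)$.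
   Context: Agents $i$ have positions $p_i\in\mathbb{R}^2$ and dynamics $\dot p_i=u_i$. For $i\neq j$ let $z_{ij}=p_j-p_i$. The information flow is a directed graph with vertex set $\{1,\dots,n\}$ and edge set $\mathcal{E}$; each agent is either a distance agent or a bearing agent. A desired configuration $p^*=(p^*_1,\dots,p^*_n)$ with distinct points is given, and $z^*_{ij}=p^*_j-p^*_i$. An edge $(i,j)$ is controlled by its tail $i$ with a gain $k>0$ and contributes to $u_i$ the term - if $i$ is a distance agent: $k\,\dfrac{\|z_{ij}\|^2-\|z^*_{ij}\|^2}{2\|z^*_{ij}\|^2}\,z_{ij}$; - if $i$ is a bearing agent: $k\,\|z^*_{ij}\|\left(\dfrac{z_{ij}}{\|z_{ij}\|}-\dfrac{z^*_{ij}}{\|z^*_{ij}\|}\right)$. Each $u_i$ is the sum of the terms of the outgoing edges of $i$ ($u_i=0$ if there are none). Since the closed loop depends only on relative positions, it induces an autonomous system for $\zeta=(p_2-p_1,\dots,p_n-p_1)$; "locally exponentially stable at $p^*$" means $\zeta^*=(p^*_2-p^*_1,\dots,p^*_n-p^*_1)$ is a locally exponentially stable equilibrium of this system. *)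

theory Defs
  imports "HOL-Analysis.Analysis"
begin

type_synonym pt = "real^2"

text \<open>Contribution of edge (i,j) to u_i. The flag isd is True for a distance agent,
  False for a bearing agent; k is the gain, z = p_j - p_i, zs = p*_j - p*_i.\<close>
definition edge_term :: "bool \<Rightarrow> real \<Rightarrow> pt \<Rightarrow> pt \<Rightarrow> pt" where
  "edge_term isd k z zs =
     (if isd then (k * (norm z ^ 2 - norm zs ^ 2) / (2 * norm zs ^ 2)) *\<^sub>R z
      else (k * norm zs) *\<^sub>R ((1 / norm z) *\<^sub>R z - (1 / norm zs) *\<^sub>R zs))"

definition control ::
  "nat \<Rightarrow> (nat \<times> nat) set \<Rightarrow> (nat \<Rightarrow> bool) \<Rightarrow> (nat \<times> nat \<Rightarrow> real) \<Rightarrow> (nat \<Rightarrow> pt)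
     \<Rightarrow> (nat \<Rightarrow> pt) \<Rightarrow> nat \<Rightarrow> pt" where
  "control n E isd k ps p i =
     (\<Sum>j\<in>{1..n}. if (i, j) \<in> E then edge_term (isd i) (k (i, j)) (p j - p i) (ps j - ps i) else 0)"

text \<open>Relative coordinates: zeta j = p_j - p_1 for j = 2..n. A configuration
  representing zeta is obtained by putting p_1 = 0.\<close>
definition conf_of :: "(nat \<Rightarrow> pt) \<Rightarrow> nat \<Rightarrow> pt" where
  "conf_of \<zeta> = (\<lambda>i. if i = 1 then 0 else \<zeta> i)"

text \<open>Induced autonomous vector field for zeta: d/dt (p_j - p_1) = u_j - u_1.\<close>
definition rel_field ::
  "nat \<Rightarrow> (nat \<times> nat) set \<Rightarrow> (nat \<Rightarrow> bool) \<Rightarrow> (nat \<times> nat \<Rightarrow> real) \<Rightarrow> (nat \<Rightarrow> pt)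
     \<Rightarrow> (nat \<Rightarrow> pt) \<Rightarrow> nat \<Rightarrow> pt" where
  "rel_field n E isd k ps \<zeta> j =
     control n E isd k ps (conf_of \<zeta>) j - control n E isd k ps (conf_of \<zeta>) 1"

definition rel_norm :: "nat \<Rightarrow> (nat \<Rightarrow> pt) \<Rightarrow> real" where
  "rel_norm n \<zeta> = sqrt (\<Sum>j\<in>{2..n}. (norm (\<zeta> j))\<^sup>2)"

definition rel_star :: "(nat \<Rightarrow> pt) \<Rightarrow> nat \<Rightarrow> pt" where
  "rel_star ps = (\<lambda>j. ps j - ps 1)"

definition is_solution ::
  "nat \<Rightarrow> (nat \<times> nat) set \<Rightarrow> (nat \<Rightarrow> bool) \<Rightarrow> (nat \<times> nat \<Rightarrow> real) \<Rightarrow> (nat \<Rightarrow> pt)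
     \<Rightarrow> (real \<Rightarrow> nat \<Rightarrow> pt) \<Rightarrow> real \<Rightarrow> bool" where
  "is_solution n E isd k ps x T \<longleftrightarrow>
     (\<forall>t\<in>{0..T}. \<forall>j\<in>{2..n}.
        ((\<lambda>s. x s j) has_vector_derivative rel_field n E isd k ps (x t) j) (at t within {0..T}))"

definition loc_exp_stable ::
  "nat \<Rightarrow> (nat \<times> nat) set \<Rightarrow> (nat \<Rightarrow> bool) \<Rightarrow> (nat \<times> nat \<Rightarrow> real) \<Rightarrow> (nat \<Rightarrow> pt) \<Rightarrow> bool" where
  "loc_exp_stable n E isd k ps \<longleftrightarrow>
     (\<exists>\<delta>>0. \<exists>c>0. \<exists>r>0. \<forall>x0.
        rel_norm n (\<lambda>j. x0 j - rel_star ps j) < \<delta> \<longrightarrow>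
          (\<exists>x. (\<forall>j\<in>{2..n}. x 0 j = x0 j) \<and> (\<forall>T\<ge>0. is_solution n E isd k ps x T)) \<and>
          (\<forall>x T. T \<ge> 0 \<longrightarrow> is_solution n E isd k ps x T \<longrightarrow> (\<forall>j\<in>{2..n}. x 0 j = x0 j) \<longrightarrow>
             (\<forall>t\<in>{0..T}. rel_norm n (\<lambda>j. x t j - rel_star ps j)
                \<le> c * rel_norm n (\<lambda>j. x0 j - rel_star ps j) * exp (- r * t))))"

end

theory Submission
  imports Defs
begin

text \<open>The merged closed loop is a cascade: the inputs of agents \<open>1, \<dots>, n\<close> do not depend
  on agent \<open>n + 1\<close>, so the old relative coordinates evolve exactly as before and decay
  exponentially. The error \<open>e\<close> of the new coordinate \<open>\<zeta>\<^sub>n\<^sub>+\<^sub>1\<close> is driven by the two new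
  edges and, through \<open>p\<^sub>1\<close> and \<open>p\<^sub>2\<close>, by the old errors. Two distance edges control the
  components of \<open>e\<close> along \<open>p\<^sup>*\<^sub>1 - p\<^sup>*\<^sub>n\<^sub>+\<^sub>1\<close> and \<open>p\<^sup>*\<^sub>2 - p\<^sup>*\<^sub>n\<^sub>+\<^sub>1\<close>, two bearing edges the
  orthogonal components; as these directions are independent, the new input satisfies
  \<open>e \<bullet> u \<le> - c \<parallel>e\<parallel>\<^sup>2 + K \<parallel>e\<parallel>\<^sup>3\<close> near \<open>e = 0\<close>, while the old errors only add a perturbation
  linear in their exponentially decaying size. A comparison argument for \<open>\<parallel>e\<parallel>\<^sup>2\<close> gives
  exponential decay from small initial errors. Solutions for the new coordinate are
  obtained by Picard iteration for the field clamped to a neighbourhood of the desired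
  value, and the decay estimate shows that the clamp is never active.\<close>

section \<open>Planar geometry\<close>

lemma inner_vec2: "(x::real^2) \<bullet> y = x$1 * y$1 + x$2 * y$2"
  by (simp add: inner_vec_def sum_2)

lemma norm_vec2_sq: "(norm (x::real^2))\<^sup>2 = (x$1)\<^sup>2 + (x$2)\<^sup>2"
  unfolding power2_norm_eq_inner inner_vec2 by (simp add: power2_eq_square)

lemma vec2_eqI: "(x::real^2)$1 = y$1 \<Longrightarrow> x$2 = y$2 \<Longrightarrow> x = y"
  by (metis exhaust_2 vec_eq_iff)

definition det2 :: "real^2 \<Rightarrow> real^2 \<Rightarrow> real" where
  "det2 u v = u$1 * v$2 - u$2 * v$1"

lemma det2_lagrange: "(norm z)\<^sup>2 * (norm w)\<^sup>2 - (z \<bullet> w)\<^sup>2 = (det2 z w)\<^sup>2"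
  unfolding norm_vec2_sq inner_vec2 det2_def by (simp add: power2_eq_square algebra_simps)

lemma det2_nonzero_if_not_collinear:
  assumes "\<not> collinear {a, b, c}"
  shows "det2 (a - c) (b - c) \<noteq> 0"
proof
  assume det: "det2 (a - c) (b - c) = 0"
  define u where "u = a - c"
  define v where "v = b - c"
  have "collinear {0, u, v}"
  proof (cases "u = 0")
    case True
    then show ?thesis by (simp add: collinear_lemma)
  next
    case False
    then have nz: "(u$1)\<^sup>2 + (u$2)\<^sup>2 \<noteq> 0" using norm_vec2_sq[of u] by auto
    have cross: "u$1 * v$2 = u$2 * v$1" using det unfolding u_def v_def det2_def by simp
    define t where "t = (v \<bullet> u) / ((u$1)\<^sup>2 + (u$2)\<^sup>2)"
    have "v = t *\<^sub>R u"
      using nz cross unfolding t_def inner_vec2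
      by (intro vec2_eqI) (simp_all add: field_simps power2_eq_square)
    then show ?thesis by (auto simp: collinear_lemma)
  qed
  then have "collinear {a, c, b}"
    using collinear_3[of a c b] unfolding u_def v_def by simp
  then show False using assms by (simp add: insert_commute)
qed

text \<open>The quadratic form controlled by one edge: distance edges only see the
  component of the error along the desired edge, bearing edges only the
  component orthogonal to it.\<close>
definition edge_gauge :: "bool \<Rightarrow> real^2 \<Rightarrow> real^2 \<Rightarrow> real" where
  "edge_gauge isd zs e = (if isd then (zs \<bullet> e)\<^sup>2 else (det2 zs e)\<^sup>2)"

lemma edge_gauge_nonneg: "edge_gauge isd zs e \<ge> 0"
  unfolding edge_gauge_def by auto

lemma edge_gauge_coercive:
  "(det2 u v)\<^sup>2 * (norm e)\<^sup>2 \<le> (edge_gauge isd u e + edge_gauge isd v e) * ((norm u)\<^sup>2 + (norm v)\<^sup>2)"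
proof -
  define p where "p = (if isd then u \<bullet> e else det2 u e)"
  define q where "q = (if isd then v \<bullet> e else det2 v e)"
  have "(edge_gauge isd u e + edge_gauge isd v e) * ((norm u)\<^sup>2 + (norm v)\<^sup>2)
      - (det2 u v)\<^sup>2 * (norm e)\<^sup>2 = (p * u$1 + q * v$1)\<^sup>2 + (p * u$2 + q * v$2)\<^sup>2"
    unfolding edge_gauge_def norm_vec2_sq det2_def p_def q_def inner_vec2
    by (simp add: power2_eq_square algebra_simps)
  moreover have "(p * u$1 + q * v$1)\<^sup>2 + (p * u$2 + q * v$2)\<^sup>2 \<ge> 0" by simp
  ultimately show ?thesis by linarith
qed

section \<open>Edge terms near their desired values\<close>

lemma edge_term_at_desired: "zs \<noteq> 0 \<Longrightarrow> edge_term isd k zs zs = 0"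
  by (simp add: edge_term_def)

lemma norm_bounds_in_half_cball:
  fixes z zs :: "'a::real_normed_vector"
  assumes "z \<in> cball zs (norm zs / 2)"
  shows "norm z \<ge> norm zs / 2" "norm z \<le> 3/2 * norm zs"
proof -
  have "norm (zs - z) \<le> norm zs / 2" using assms by (simp add: dist_norm)
  then show "norm z \<ge> norm zs / 2" "norm z \<le> 3/2 * norm zs"
    using norm_triangle_ineq2[of zs z] norm_triangle_ineq3[of z zs] norm_minus_commute[of zs z]
    by auto
qed

lemma norm_unit_vector_diff_le:
  fixes z z' :: "'a::real_normed_vector"
  assumes "z \<noteq> 0" "z' \<noteq> 0"
  shows "norm ((1 / norm z) *\<^sub>R z - (1 / norm z') *\<^sub>R z') \<le> 2 * norm (z - z') / norm z"
proof -
  have split: "(1 / norm z) *\<^sub>R z - (1 / norm z') *\<^sub>R z'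
      = (1 / norm z) *\<^sub>R (z - z') + (1 / norm z - 1 / norm z') *\<^sub>R z'"
    by (simp add: algebra_simps)
  have "norm ((1 / norm z - 1 / norm z') *\<^sub>R z') = \<bar>norm z' - norm z\<bar> / norm z"
    using assms by (simp add: field_simps abs_mult[symmetric] abs_div)
  also have "\<dots> \<le> norm (z - z') / norm z"
    using assms by (intro divide_right_mono) (auto simp: norm_triangle_ineq3 abs_minus_commute)
  finally show ?thesis
    unfolding split
    using norm_triangle_ineq[of "(1 / norm z) *\<^sub>R (z - z')" "(1 / norm z - 1 / norm z') *\<^sub>R z'"]
    by simp
qed

lemma lipschitz_on_cball_norm_le:
  fixes f :: "'a::real_normed_vector \<Rightarrow> 'b::real_normed_vector"
  assumes "L-lipschitz_on (cball a r) f" "f a = 0" "z \<in> cball a r"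
  shows "norm (f z) \<le> L * r"
proof -
  have "r \<ge> 0" using assms(3) by (metis mem_cball zero_le_dist order_trans)
  have "norm (f z) = norm (f z - f a)" using assms(2) by simp
  also have "\<dots> \<le> L * norm (z - a)"
    using assms(3) \<open>r \<ge> 0\<close> by (intro lipschitz_on_normD[OF assms(1)]) auto
  also have "\<dots> \<le> L * r"
    using assms(3) lipschitz_on_nonneg[OF assms(1)]
    by (intro mult_left_mono) (auto simp: dist_norm norm_minus_commute)
  finally show ?thesis .
qed

lemma bearing_term_lipschitz:
  assumes "zs \<noteq> 0" "k > 0"
  shows "(4 * k)-lipschitz_on (cball zs (norm zs / 2)) (\<lambda>z. edge_term False k z zs)"
proof (rule lipschitz_onI)
  fix z z' assume z: "z \<in> cball zs (norm zs / 2)" and z': "z' \<in> cball zs (norm zs / 2)"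
  define d where "d = norm zs"
  have d: "d > 0" using assms d_def by auto
  have nz: "norm z \<ge> d / 2" using norm_bounds_in_half_cball[OF z] d_def by auto
  have nz0: "z \<noteq> 0" "z' \<noteq> 0" using nz d norm_bounds_in_half_cball[OF z'] d_def by auto
  have "dist (edge_term False k z zs) (edge_term False k z' zs)
      = norm ((k * d) *\<^sub>R ((1 / norm z) *\<^sub>R z - (1 / norm z') *\<^sub>R z'))"
    by (simp add: edge_term_def dist_norm d_def algebra_simps)
  also have "\<dots> = (k * d) * norm ((1 / norm z) *\<^sub>R z - (1 / norm z') *\<^sub>R z')"
    using assms d by simp
  also have "\<dots> \<le> (k * d) * (2 * norm (z - z') / (d / 2))"
  proof -
    have "2 * norm (z - z') / norm z \<le> 2 * norm (z - z') / (d / 2)"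
      using nz d by (intro divide_left_mono) (auto simp: zero_less_mult_iff)
    then show ?thesis
      using norm_unit_vector_diff_le[OF nz0] assms d
      by (intro mult_left_mono) auto
  qed
  also have "\<dots> = (4 * k) * dist z z'" using d by (simp add: dist_norm field_simps)
  finally show "dist (edge_term False k z zs) (edge_term False k z' zs) \<le> (4 * k) * dist z z'" .
qed (use assms in simp)

lemma distance_term_lipschitz:
  assumes "zs \<noteq> 0" "k > 0"
  shows "(15/4 * k)-lipschitz_on (cball zs (norm zs / 2)) (\<lambda>z. edge_term True k z zs)"
proof (rule lipschitz_onI)
  fix z z' assume z: "z \<in> cball zs (norm zs / 2)" and z': "z' \<in> cball zs (norm zs / 2)"
  define d where "d = norm zs"
  have d: "d > 0" using assms d_def by auto
  define c where "c = k / (2 * d\<^sup>2)"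
  have c: "c > 0" using d assms c_def by auto
  have nz: "norm z \<le> 3/2 * d" "norm z' \<le> 3/2 * d"
    using norm_bounds_in_half_cball[OF z] norm_bounds_in_half_cball[OF z'] d_def by auto
  have explicit: "edge_term True k y zs = (c * ((norm y)\<^sup>2 - d\<^sup>2)) *\<^sub>R y" for y
    by (simp add: edge_term_def c_def d_def)
  have split: "(c * ((norm z)\<^sup>2 - d\<^sup>2)) *\<^sub>R z - (c * ((norm z')\<^sup>2 - d\<^sup>2)) *\<^sub>R z'
      = c *\<^sub>R (((norm z)\<^sup>2 - (norm z')\<^sup>2) *\<^sub>R z + ((norm z')\<^sup>2 - d\<^sup>2) *\<^sub>R (z - z'))"
    by (simp add: algebra_simps)
  have sq_diff: "\<bar>(norm z)\<^sup>2 - (norm z')\<^sup>2\<bar> \<le> norm (z - z') * (3 * d)"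
  proof -
    have "(norm z)\<^sup>2 - (norm z')\<^sup>2 = (norm z - norm z') * (norm z + norm z')"
      by (simp add: power2_eq_square algebra_simps)
    then have "\<bar>(norm z)\<^sup>2 - (norm z')\<^sup>2\<bar> = \<bar>norm z - norm z'\<bar> * (norm z + norm z')"
      by (simp add: abs_mult)
    also have "\<dots> \<le> norm (z - z') * (3 * d)"
      using nz by (intro mult_mono) (auto simp: norm_triangle_ineq3)
    finally show ?thesis .
  qed
  have sq_dev: "\<bar>(norm z')\<^sup>2 - d\<^sup>2\<bar> \<le> 3 * d\<^sup>2"
  proof -
    have "(norm z')\<^sup>2 \<le> (3/2 * d)\<^sup>2" using nz by (intro power_mono) auto
    moreover have "(3/2 * d)\<^sup>2 = 9/4 * d\<^sup>2" by (simp add: power2_eq_square)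
    moreover have "0 \<le> (norm z')\<^sup>2" "0 \<le> d\<^sup>2" by simp_all
    ultimately show ?thesis unfolding abs_le_iff by linarith
  qed
  have "dist (edge_term True k z zs) (edge_term True k z' zs)
      = c * norm (((norm z)\<^sup>2 - (norm z')\<^sup>2) *\<^sub>R z + ((norm z')\<^sup>2 - d\<^sup>2) *\<^sub>R (z - z'))"
    unfolding dist_norm explicit split using c by simp
  also have "\<dots> \<le> c * (\<bar>(norm z)\<^sup>2 - (norm z')\<^sup>2\<bar> * norm z + \<bar>(norm z')\<^sup>2 - d\<^sup>2\<bar> * norm (z - z'))"
    using c by (intro mult_left_mono) (auto intro: norm_triangle_le)
  also have "\<dots> \<le> c * ((norm (z - z') * (3 * d)) * (3/2 * d) + (3 * d\<^sup>2) * norm (z - z'))"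
    using c sq_diff sq_dev nz d by (intro mult_left_mono add_mono mult_mono) auto
  also have "\<dots> = (15/4 * k) * dist z z'"
    using d by (simp add: c_def dist_norm power2_eq_square field_simps)
  finally show "dist (edge_term True k z zs) (edge_term True k z' zs) \<le> (15/4 * k) * dist z z'" .
qed (use assms in simp)

lemma edge_term_lipschitz:
  assumes "zs \<noteq> 0" "k > 0"
  shows "\<exists>L. L-lipschitz_on (cball zs (norm zs / 2)) (\<lambda>z. edge_term isd k z zs)"
  using bearing_term_lipschitz[OF assms] distance_term_lipschitz[OF assms] by (cases isd) auto

lemma distance_term_descent:
  assumes "zs \<noteq> 0" "k > 0"
  shows "e \<bullet> edge_term True k (zs - e) zs
           \<le> - (k / (norm zs)\<^sup>2) * (zs \<bullet> e)\<^sup>2 + 3 * k / (2 * norm zs) * norm e ^ 3"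
proof -
  define d where "d = norm zs"
  define s where "s = zs \<bullet> e"
  have d: "d > 0" using assms d_def by auto
  have s: "s \<le> d * norm e" unfolding s_def d_def using norm_cauchy_schwarz[of zs e] by simp
  have norm_diff: "(norm (zs - e))\<^sup>2 = d\<^sup>2 - 2 * s + (norm e)\<^sup>2"
    unfolding s_def d_def power2_norm_eq_inner by (simp add: inner_diff algebra_simps inner_commute)
  have inner_diff: "e \<bullet> (zs - e) = s - (norm e)\<^sup>2"
    unfolding s_def power2_norm_eq_inner by (simp add: inner_diff inner_commute)
  have "e \<bullet> edge_term True k (zs - e) zs = k / (2 * d\<^sup>2) * ((norm (zs - e))\<^sup>2 - d\<^sup>2) * (e \<bullet> (zs - e))"
    by (simp add: edge_term_def d_def)
  also have "\<dots> = k / (2 * d\<^sup>2) * (- 2 * s\<^sup>2 + 3 * s * (norm e)\<^sup>2 - (norm e)^4)"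
    unfolding norm_diff inner_diff by (simp add: field_simps power2_eq_square power4_eq_xxxx)
  also have "\<dots> \<le> k / (2 * d\<^sup>2) * (- 2 * s\<^sup>2 + 3 * (d * norm e) * (norm e)\<^sup>2)"
  proof -
    have "3 * s * (norm e)\<^sup>2 \<le> 3 * (d * norm e) * (norm e)\<^sup>2"
      using s by (intro mult_right_mono mult_left_mono) auto
    moreover have "(norm e)^4 \<ge> 0" by simp
    ultimately have "- 2 * s\<^sup>2 + 3 * s * (norm e)\<^sup>2 - (norm e)^4 \<le> - 2 * s\<^sup>2 + 3 * (d * norm e) * (norm e)\<^sup>2"
      by linarith
    then show ?thesis using assms d by (intro mult_left_mono) auto
  qed
  also have "\<dots> = - (k / d\<^sup>2) * s\<^sup>2 + 3 * k / (2 * d) * norm e ^ 3"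
    using d by (simp add: field_simps power2_eq_square power3_eq_cube)
  finally show ?thesis unfolding d_def s_def .
qed

text \<open>In terms of \<open>a = \<parallel>zs - e\<parallel>\<close>, \<open>d = \<parallel>zs\<parallel>\<close> and \<open>p = (zs - e) \<bullet> zs\<close>, the bearing
  term gives \<open>e \<bullet> u = - k (a + d) (a d - p) / a\<close>, and \<open>a d - p\<close> dominates the
  squared determinant by Lagrange's identity \<open>(a d)\<^sup>2 - p\<^sup>2 = D\<^sup>2\<close>.\<close>
lemma bearing_descent_scalar:
  fixes a d p D k :: real
  assumes "k > 0" "d > 0" "d / 2 \<le> a" "a \<le> 3/2 * d"
    and lagrange: "a\<^sup>2 * d\<^sup>2 - p\<^sup>2 = D\<^sup>2" and cs: "\<bar>p\<bar> \<le> a * d"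
  shows "- k * (a + d) * (a * d - p) / a \<le> - (k / (4 * d\<^sup>2)) * D\<^sup>2"
proof -
  have a: "a > 0" using assms by auto
  have gap: "a * d - p \<ge> 0" using cs by auto
  have "D\<^sup>2 = (a * d - p) * (a * d + p)" using lagrange by (simp add: power2_eq_square algebra_simps)
  also have "\<dots> \<le> (a * d - p) * (3 * d\<^sup>2)"
  proof -
    have "a * d \<le> 3/2 * d * d" using assms by (intro mult_right_mono) auto
    then have "a * d + p \<le> 3 * d\<^sup>2" using cs by (simp add: power2_eq_square)
    then show ?thesis using gap by (intro mult_left_mono) auto
  qed
  finally have "D\<^sup>2 / (3 * d\<^sup>2) \<le> a * d - p" using assms by (simp add: field_simps)
  also have "\<dots> \<le> (a + d) * (a * d - p) / a"
    using a gap assms by (simp add: field_simps)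
  finally have "D\<^sup>2 / (4 * d\<^sup>2) \<le> (a + d) * (a * d - p) / a"
    using assms by (smt (verit, best) divide_left_mono mult_pos_pos zero_le_power2 zero_less_power)
  then have "k * (D\<^sup>2 / (4 * d\<^sup>2)) \<le> k * ((a + d) * (a * d - p) / a)"
    using assms by (intro mult_left_mono) auto
  then show ?thesis by simp
qed

lemma bearing_term_descent:
  assumes "zs \<noteq> 0" "k > 0" "norm e \<le> norm zs / 2"
  shows "e \<bullet> edge_term False k (zs - e) zs \<le> - (k / (4 * (norm zs)\<^sup>2)) * (det2 zs e)\<^sup>2"
proof -
  define z where "z = zs - e"
  define a where "a = norm z"
  define d where "d = norm zs"
  define p where "p = z \<bullet> zs"
  have d: "d > 0" using assms d_def by auto
  have "z \<in> cball zs (norm zs / 2)" using assms by (simp add: z_def dist_norm)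
  then have a: "d / 2 \<le> a" "a \<le> 3/2 * d" using norm_bounds_in_half_cball a_def d_def by auto
  have "e \<bullet> edge_term False k z zs = (k * d) * ((1 / a) * (e \<bullet> z) - (1 / d) * (e \<bullet> zs))"
    by (simp add: edge_term_def a_def d_def inner_diff_right)
  also have "\<dots> = - k * (a + d) * (a * d - p) / a"
  proof -
    have ez: "e \<bullet> z = p - a\<^sup>2" unfolding p_def a_def z_def power2_norm_eq_inner
      by (simp add: inner_diff inner_commute algebra_simps)
    have ezs: "e \<bullet> zs = d\<^sup>2 - p" unfolding p_def d_def z_def power2_norm_eq_inner
      by (simp add: inner_diff inner_commute algebra_simps)
    show ?thesis unfolding ez ezs using a d by (simp add: field_simps power2_eq_square)
  qed
  also have "\<dots> \<le> - (k / (4 * d\<^sup>2)) * (det2 zs e)\<^sup>2"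
  proof (rule bearing_descent_scalar[OF assms(2) d a])
    have "det2 z zs = det2 zs e" unfolding z_def det2_def by (simp add: algebra_simps)
    then show "a\<^sup>2 * d\<^sup>2 - p\<^sup>2 = (det2 zs e)\<^sup>2"
      using det2_lagrange[of z zs] unfolding a_def d_def p_def by simp
    show "\<bar>p\<bar> \<le> a * d" unfolding p_def a_def d_def by (rule Cauchy_Schwarz_ineq2)
  qed
  finally show ?thesis unfolding z_def d_def .
qed

lemma edge_term_descent:
  assumes "zs \<noteq> 0" "k > 0"
  obtains \<alpha> K where "\<alpha> > 0" "K \<ge> 0"
    "\<And>e. norm e \<le> norm zs / 2 \<Longrightarrow>
       e \<bullet> edge_term isd k (zs - e) zs \<le> - \<alpha> * edge_gauge isd zs e + K * norm e ^ 3"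
proof (cases isd)
  case True
  show ?thesis
    by (rule that[of "k / (norm zs)\<^sup>2" "3 * k / (2 * norm zs)"])
      (use assms True distance_term_descent[OF assms] in \<open>auto simp: edge_gauge_def\<close>)
next
  case False
  show ?thesis
    by (rule that[of "k / (4 * (norm zs)\<^sup>2)" 0])
      (use assms False bearing_term_descent[OF assms] in \<open>auto simp: edge_gauge_def\<close>)
qed

lemma two_edge_descent:
  assumes det: "det2 u v \<noteq> 0" and k1: "k1 > 0" and k2: "k2 > 0"
  obtains c K where "c > 0" "K \<ge> 0"
    "\<And>e. norm e \<le> min (norm u) (norm v) / 2 \<Longrightarrow>
       e \<bullet> (edge_term isd k1 (u - e) u + edge_term isd k2 (v - e) v) \<le> - c * (norm e)\<^sup>2 + K * norm e ^ 3"
proof -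
  have u: "u \<noteq> 0" and v: "v \<noteq> 0" using det unfolding det2_def by auto
  obtain \<alpha>1 K1 where \<alpha>1: "\<alpha>1 > 0" "K1 \<ge> 0" and desc1: "\<And>e. norm e \<le> norm u / 2 \<Longrightarrow>
      e \<bullet> edge_term isd k1 (u - e) u \<le> - \<alpha>1 * edge_gauge isd u e + K1 * norm e ^ 3"
    using edge_term_descent[OF u k1] by metis
  obtain \<alpha>2 K2 where \<alpha>2: "\<alpha>2 > 0" "K2 \<ge> 0" and desc2: "\<And>e. norm e \<le> norm v / 2 \<Longrightarrow>
      e \<bullet> edge_term isd k2 (v - e) v \<le> - \<alpha>2 * edge_gauge isd v e + K2 * norm e ^ 3"
    using edge_term_descent[OF v k2] by metis
  define N where "N = (norm u)\<^sup>2 + (norm v)\<^sup>2"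
  have N: "N > 0" unfolding N_def using u by (simp add: add_pos_nonneg)
  define c where "c = min \<alpha>1 \<alpha>2 * (det2 u v)\<^sup>2 / N"
  show ?thesis
  proof (rule that)
    show "c > 0" unfolding c_def using \<alpha>1 \<alpha>2 N det by simp
    show "K1 + K2 \<ge> 0" using \<alpha>1 \<alpha>2 by simp
    fix e :: "real^2" assume e: "norm e \<le> min (norm u) (norm v) / 2"
    have "(det2 u v)\<^sup>2 * (norm e)\<^sup>2 / N \<le> edge_gauge isd u e + edge_gauge isd v e"
      using edge_gauge_coercive[of u v e isd] N by (simp add: N_def field_simps)
    then have "min \<alpha>1 \<alpha>2 * ((det2 u v)\<^sup>2 * (norm e)\<^sup>2 / N)
        \<le> min \<alpha>1 \<alpha>2 * (edge_gauge isd u e + edge_gauge isd v e)"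
      using \<alpha>1 \<alpha>2 by (intro mult_left_mono) auto
    then have gauge: "c * (norm e)\<^sup>2 \<le> min \<alpha>1 \<alpha>2 * (edge_gauge isd u e + edge_gauge isd v e)"
      by (simp add: c_def)
    have "e \<bullet> (edge_term isd k1 (u - e) u + edge_term isd k2 (v - e) v)
        \<le> - \<alpha>1 * edge_gauge isd u e - \<alpha>2 * edge_gauge isd v e + (K1 + K2) * norm e ^ 3"
      using desc1[of e] desc2[of e] e by (simp add: inner_add_right algebra_simps)
    also have "\<dots> \<le> - min \<alpha>1 \<alpha>2 * (edge_gauge isd u e + edge_gauge isd v e) + (K1 + K2) * norm e ^ 3"
      using edge_gauge_nonneg[of isd u e] edge_gauge_nonneg[of isd v e]
        mult_right_mono[OF min.cobounded1[of \<alpha>1 \<alpha>2], of "edge_gauge isd u e"]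
        mult_right_mono[OF min.cobounded2[of \<alpha>1 \<alpha>2], of "edge_gauge isd v e"]
      by (simp add: algebra_simps)
    also have "\<dots> \<le> - c * (norm e)\<^sup>2 + (K1 + K2) * norm e ^ 3" using gauge by simp
    finally show "e \<bullet> (edge_term isd k1 (u - e) u + edge_term isd k2 (v - e) v)
        \<le> - c * (norm e)\<^sup>2 + (K1 + K2) * norm e ^ 3" .
  qed
qed

section \<open>Differential inequalities\<close>

lemma norm_sq_diff_has_derivative:
  fixes w :: "real \<Rightarrow> 'a::real_inner"
  assumes "(w has_vector_derivative W) (at t within S)"
  shows "((\<lambda>t. (norm (w t - ws))\<^sup>2) has_real_derivative 2 * ((w t - ws) \<bullet> W)) (at t within S)"
proof -
  have diff: "((\<lambda>t. w t - ws) has_derivative (\<lambda>h. h *\<^sub>R W)) (at t within S)"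
    using assms unfolding has_vector_derivative_def by (auto intro!: derivative_eq_intros)
  have "((\<lambda>t. (w t - ws) \<bullet> (w t - ws)) has_derivative (\<lambda>h. (2 * ((w t - ws) \<bullet> W)) * h)) (at t within S)"
    by (rule has_derivative_eq_rhs[OF has_derivative_inner[OF diff diff]])
      (auto simp: inner_commute algebra_simps)
  then show ?thesis unfolding has_field_derivative_def power2_norm_eq_inner by simp
qed

text \<open>A continuous quantity that is forced below \<open>Q\<close> as long as it stays below \<open>R > Q\<close>
  never reaches \<open>R\<close>: at the first time it would reach \<open>(Q + R) / 2\<close> it is still
  below \<open>R\<close>, hence below \<open>Q\<close>.\<close>
lemma continuous_barrier:
  fixes V :: "real \<Rightarrow> real"
  assumes cont: "continuous_on {0..T} V" and QR: "Q < R" and V0: "V 0 \<le> Q"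
    and bound: "\<And>t. t \<in> {0..T} \<Longrightarrow> \<forall>s\<in>{0..t}. V s \<le> R \<Longrightarrow> V t \<le> Q"
    and t: "t \<in> {0..T}"
  shows "V t \<le> Q"
proof -
  define R' where "R' = (Q + R) / 2"
  have R': "Q < R'" "R' < R" using QR unfolding R'_def by auto
  have below: "\<forall>t\<in>{0..T}. V t < R'"
  proof (rule ccontr)
    assume "\<not> (\<forall>t\<in>{0..T}. V t < R')"
    define S where "S = {0..T} \<inter> V -` {R'..}"
    have "S \<noteq> {}" using \<open>\<not> _\<close> unfolding S_def by auto
    moreover have "compact S"
      unfolding S_def compact_eq_bounded_closed
      by (auto intro: continuous_closed_preimage[OF cont] bounded_subset[of "{0..T}"])
    ultimately obtain t1 where t1: "t1 \<in> S" and first: "\<forall>t\<in>S. t1 \<le> t"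
      using compact_attains_inf by blast
    have t1T: "t1 \<in> {0..T}" "V t1 \<ge> R'" using t1 unfolding S_def by auto
    obtain x where x: "0 \<le> x" "x \<le> t1" "V x = R'"
      using IVT'[of V 0 R' t1] R' V0 t1T continuous_on_subset[OF cont] by auto
    then have "x \<in> S" using t1T unfolding S_def by auto
    then have Vt1: "V t1 = R'" using first x by force
    have "\<forall>s\<in>{0..t1}. V s \<le> R"
    proof
      fix s assume s: "s \<in> {0..t1}"
      show "V s \<le> R"
      proof (cases "s = t1")
        case False
        then have "s \<notin> S" using first s by force
        then show ?thesis using s t1T R' unfolding S_def by auto
      qed (use Vt1 R' in simp)
    qed
    then have "V t1 \<le> Q" using bound t1T by auto
    then show False using Vt1 R' by simp
  qed
  have "\<forall>s\<in>{0..t}. V s \<le> R" using below t R' by force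
  then show ?thesis using bound t by auto
qed

lemma weighted_decay_while_bounded:
  fixes V V' :: "real \<Rightarrow> real"
  assumes \<gamma>: "0 < \<gamma>" "\<gamma> \<le> a" "\<gamma> < \<beta>" and B: "B \<ge> 0"
    and nonneg: "\<And>t. t \<in> {0..T} \<Longrightarrow> V t \<ge> 0"
    and der: "\<And>t. t \<in> {0..T} \<Longrightarrow> (V has_real_derivative V' t) (at t within {0..T})"
    and ineq: "\<And>t. t \<in> {0..T} \<Longrightarrow> V t \<le> R \<Longrightarrow> V' t \<le> - a * V t + B * exp (- \<beta> * t)"
    and t: "t \<in> {0..T}" and bounded: "\<forall>s\<in>{0..t}. V s \<le> R"
  shows "V t \<le> (V 0 + B / (\<beta> - \<gamma>)) * exp (- \<gamma> * t)"
proof -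
  define C where "C = \<beta> - \<gamma>"
  have C: "C > 0" using \<gamma> unfolding C_def by simp
  define Q where "Q s = V s * exp (\<gamma> * s) + B / C * exp (- C * s)" for s
  define Q' where "Q' s = V' s * exp (\<gamma> * s) + V s * (\<gamma> * exp (\<gamma> * s)) - B * exp (- C * s)" for s
  have "(Q has_real_derivative Q' s) (at s within {0..t})" if "s \<in> {0..t}" for s
  proof -
    have "(V has_real_derivative V' s) (at s within {0..t})"
      using der[of s] that t by (auto intro: DERIV_subset)
    then show ?thesis
      unfolding Q_def Q'_def using C by (auto intro!: derivative_eq_intros)
  qed
  then obtain x where x: "x \<in> {0..t}" and mvt: "Q t - Q 0 = Q' x * t"
    using mvt_very_simple[of 0 t Q "\<lambda>s h. Q' s * h"] t
    by (auto simp: has_field_derivative_def)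
  have xT: "x \<in> {0..T}" using x t by auto
  have "V' x * exp (\<gamma> * x) \<le> (- a * V x + B * exp (- \<beta> * x)) * exp (\<gamma> * x)"
    using ineq[OF xT] bounded x by (intro mult_right_mono) auto
  also have "\<dots> = - a * V x * exp (\<gamma> * x) + B * exp (- C * x)"
    unfolding C_def by (simp add: algebra_simps mult_exp_exp)
  finally have "Q' x \<le> (\<gamma> - a) * (V x * exp (\<gamma> * x))"
    unfolding Q'_def by (simp add: algebra_simps)
  also have "\<dots> \<le> 0" using \<gamma> nonneg[OF xT] by (intro mult_nonpos_nonneg) auto
  finally have "Q' x * t \<le> 0" using t by (simp add: mult_nonpos_nonneg)
  then have "Q t \<le> Q 0" using mvt by simp
  moreover have "V t * exp (\<gamma> * t) \<le> Q t" unfolding Q_def using B C by simp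
  moreover have "Q 0 = V 0 + B / C" unfolding Q_def by simp
  ultimately have "V t * exp (\<gamma> * t) \<le> V 0 + B / C" by simp
  then show ?thesis unfolding C_def by (simp add: exp_minus field_simps)
qed

lemma exponential_comparison:
  fixes V V' :: "real \<Rightarrow> real"
  assumes \<gamma>: "0 < \<gamma>" "\<gamma> \<le> a" "\<gamma> < \<beta>" and B: "B \<ge> 0"
    and nonneg: "\<And>t. t \<in> {0..T} \<Longrightarrow> V t \<ge> 0"
    and der: "\<And>t. t \<in> {0..T} \<Longrightarrow> (V has_real_derivative V' t) (at t within {0..T})"
    and ineq: "\<And>t. t \<in> {0..T} \<Longrightarrow> V t \<le> R \<Longrightarrow> V' t \<le> - a * V t + B * exp (- \<beta> * t)"
    and init: "V 0 + B / (\<beta> - \<gamma>) < R"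
    and t: "t \<in> {0..T}"
  shows "V t \<le> (V 0 + B / (\<beta> - \<gamma>)) * exp (- \<gamma> * t)"
proof -
  have weighted: "V s \<le> (V 0 + B / (\<beta> - \<gamma>)) * exp (- \<gamma> * s)"
    if "s \<in> {0..T}" "\<forall>s'\<in>{0..s}. V s' \<le> R" for s
    by (rule weighted_decay_while_bounded[OF \<gamma> B nonneg der ineq that])
  have cont: "continuous_on {0..T} V"
    unfolding continuous_on_eq_continuous_within using der DERIV_continuous by blast
  have "V s \<le> V 0 + B / (\<beta> - \<gamma>)" if s: "s \<in> {0..T}" for s
  proof (rule continuous_barrier[OF cont init _ _ s])
    show "V 0 \<le> V 0 + B / (\<beta> - \<gamma>)" using B \<gamma> by simp
    fix s' assume s': "s' \<in> {0..T}" "\<forall>s''\<in>{0..s'}. V s'' \<le> R"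
    have "0 \<le> V 0 + B / (\<beta> - \<gamma>)" using nonneg[of 0] s B \<gamma> by auto
    then have "(V 0 + B / (\<beta> - \<gamma>)) * exp (- \<gamma> * s') \<le> V 0 + B / (\<beta> - \<gamma>)"
      using s' \<gamma> by (intro mult_left_le) auto
    then show "V s' \<le> V 0 + B / (\<beta> - \<gamma>)" using weighted[OF s'] by linarith
  qed
  then show ?thesis using weighted[OF t] init t by force
qed

lemma sum_of_exp_decays_le:
  fixes a b r1 r2 t :: real
  assumes "a \<ge> 0" "b \<ge> 0" "t \<ge> 0"
  shows "a * exp (- r1 * t) + b * exp (- r2 * t) \<le> (a + b) * exp (- min r1 r2 * t)"
proof -
  have "exp (- r1 * t) \<le> exp (- min r1 r2 * t)" "exp (- r2 * t) \<le> exp (- min r1 r2 * t)"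
    using assms(3) by (auto intro: mult_right_mono)
  then show ?thesis using assms(1,2) by (simp add: distrib_right add_mono mult_left_mono)
qed

lemma perturbed_descent_inequality:
  fixes e h w :: "'a::real_inner"
  assumes c: "c > 0" and K: "K \<ge> 0" and small: "norm e \<le> c / (2 * K + 2)"
    and descent: "e \<bullet> h \<le> - c * (norm e)\<^sup>2 + K * norm e ^ 3"
    and perturbation: "norm (w - h) \<le> p"
  shows "2 * (e \<bullet> w) \<le> - (c / 2) * (norm e)\<^sup>2 + 2 * p\<^sup>2 / c"
proof -
  have cubic: "K * norm e ^ 3 \<le> c / 2 * (norm e)\<^sup>2"
  proof -
    have "K * norm e \<le> K * (c / (2 * K + 2))" using small K by (intro mult_left_mono) auto
    also have "\<dots> \<le> c / 2" using K c by (simp add: field_simps)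
    finally have "K * norm e * (norm e)\<^sup>2 \<le> c / 2 * (norm e)\<^sup>2" by (intro mult_right_mono) auto
    then show ?thesis by (simp add: power3_eq_cube power2_eq_square algebra_simps)
  qed
  have "e \<bullet> w = e \<bullet> h + e \<bullet> (w - h)" by (simp add: inner_diff_right)
  also have "\<dots> \<le> e \<bullet> h + norm e * p"
    using Cauchy_Schwarz_ineq2[of e "w - h"] mult_left_mono[OF perturbation norm_ge_zero[of e]]
    by linarith
  finally have "e \<bullet> w \<le> - c / 2 * (norm e)\<^sup>2 + norm e * p" using descent cubic by linarith
  moreover have "norm e * p \<le> c / 4 * (norm e)\<^sup>2 + p\<^sup>2 / c"
  proof -
    have "0 \<le> (c * norm e - 2 * p)\<^sup>2 / (4 * c)" using c by simp
    also have "\<dots> = c / 4 * (norm e)\<^sup>2 + p\<^sup>2 / c - norm e * p"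
      using c by (simp add: field_simps power2_eq_square)
    finally show ?thesis by simp
  qed
  ultimately show ?thesis by linarith
qed

lemma perturbed_descent_decay:
  fixes w W :: "real \<Rightarrow> 'a::real_inner" and H :: "'a \<Rightarrow> 'a"
  assumes c: "c > 0" and K: "K \<ge> 0" and \<rho>: "0 \<le> \<rho>" "\<rho> \<le> c / (2 * K + 2)" and r: "r > 0" and A: "A \<ge> 0"
    and der: "\<And>t. t \<in> {0..T} \<Longrightarrow> (w has_vector_derivative W t) (at t within {0..T})"
    and perturbation: "\<And>t. t \<in> {0..T} \<Longrightarrow> norm (w t - ws) \<le> \<rho> \<Longrightarrow>
                         norm (W t - H (w t - ws)) \<le> A * exp (- r * t)"
    and descent: "\<And>e. norm e \<le> \<rho> \<Longrightarrow> e \<bullet> H e \<le> - c * (norm e)\<^sup>2 + K * norm e ^ 3"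
    and init: "(norm (w 0 - ws))\<^sup>2 + 2 * A\<^sup>2 / (c * r) < \<rho>\<^sup>2"
    and t: "t \<in> {0..T}"
  shows "(norm (w t - ws))\<^sup>2
           \<le> ((norm (w 0 - ws))\<^sup>2 + 2 * A\<^sup>2 / (c * r)) * exp (- (min (c / 2) (2 * r) / 2) * t)"
proof -
  define V where "V t = (norm (w t - ws))\<^sup>2" for t
  define \<gamma> where "\<gamma> = min (c / 2) (2 * r) / 2"
  define B where "B = 2 * A\<^sup>2 / c"
  have B: "B \<ge> 0" unfolding B_def using c by simp
  have \<gamma>: "0 < \<gamma>" "\<gamma> \<le> c / 2" "\<gamma> < 2 * r" "\<gamma> \<le> r" unfolding \<gamma>_def using c r by auto
  have tail: "B / (2 * r - \<gamma>) \<le> 2 * A\<^sup>2 / (c * r)"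
  proof -
    have "B / (2 * r - \<gamma>) \<le> B / r" using B \<gamma> r by (intro divide_left_mono) auto
    then show ?thesis unfolding B_def by simp
  qed
  have "V t \<le> (V 0 + B / (2 * r - \<gamma>)) * exp (- \<gamma> * t)"
  proof (rule exponential_comparison[OF \<gamma>(1-3) B])
    fix s assume s: "s \<in> {0..T}"
    show "V s \<ge> 0" unfolding V_def by simp
    show "(V has_real_derivative 2 * ((w s - ws) \<bullet> W s)) (at s within {0..T})"
      unfolding V_def by (rule norm_sq_diff_has_derivative[OF der[OF s]])
    assume "V s \<le> \<rho>\<^sup>2"
    then have near: "norm (w s - ws) \<le> \<rho>"
      unfolding V_def using \<rho> by (simp add: power2_le_iff_abs_le)
    have "2 * ((w s - ws) \<bullet> W s) \<le> - (c / 2) * V s + 2 * (A * exp (- r * s))\<^sup>2 / c"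
      unfolding V_def using near \<rho>
      by (intro perturbed_descent_inequality[OF c K _ descent[OF near] perturbation[OF s near]]) simp
    also have "2 * (A * exp (- r * s))\<^sup>2 / c = B * exp (- (2 * r) * s)"
      unfolding B_def by (simp add: power_mult_distrib power2_eq_square mult_exp_exp)
    finally show "2 * ((w s - ws) \<bullet> W s) \<le> - (c / 2) * V s + B * exp (- (2 * r) * s)" .
  next
    show "V 0 + B / (2 * r - \<gamma>) < \<rho>\<^sup>2" using init tail unfolding V_def by simp
  qed (use t in auto)
  also have "\<dots> \<le> (V 0 + 2 * A\<^sup>2 / (c * r)) * exp (- \<gamma> * t)"
    using tail by (intro mult_right_mono) auto
  finally show ?thesis unfolding V_def \<gamma>_def .
qed

section \<open>Global solutions by Picard iteration\<close>

lemma integral_from_zero_lipschitz: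
  fixes f :: "real \<Rightarrow> 'a::banach"
  assumes cont: "\<And>T. continuous_on {0..T} f" and bound: "\<And>s. s \<ge> 0 \<Longrightarrow> norm (f s) \<le> M"
    and "0 \<le> t" "0 \<le> t'"
  shows "norm (integral {0..t} f - integral {0..t'} f) \<le> M * \<bar>t - t'\<bar>"
proof -
  have ordered: "norm (integral {0..t} f - integral {0..t'} f) \<le> M * (t' - t)"
    if "0 \<le> t" "t \<le> t'" for t t'
  proof -
    have "integral {0..t} f + integral {t..t'} f = integral {0..t'} f"
      using that integrable_continuous_interval[OF cont] by (intro Henstock_Kurzweil_Integration.integral_combine) auto
    then have "integral {0..t} f - integral {0..t'} f = - integral {t..t'} f"
      by (simp add: algebra_simps)
    then have "norm (integral {0..t} f - integral {0..t'} f) = norm (integral {t..t'} f)"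
      by simp
    also have "\<dots> \<le> M * (t' - t)"
      using that bound by (intro integral_bound continuous_on_subset[OF cont[of t']]) auto
    finally show ?thesis .
  qed
  show ?thesis
  proof (cases "t \<le> t'")
    case True
    then show ?thesis using ordered[of t t'] assms(3) by simp
  next
    case False
    then show ?thesis using ordered[of t' t] assms(4) by (simp add: norm_minus_commute)
  qed
qed

text \<open>The Picard operator in the rescaled unknown \<open>g t = exp (- 2 L t) w t\<close>, extended
  constantly to \<open>t < 0\<close>. The weight makes it a contraction on bounded continuous
  functions, so a single fixed point solves the equation on all of \<open>[0, \<infinity>)\<close>.\<close>
definition weighted_picard ::
  "real \<Rightarrow> (real \<Rightarrow> 'a \<Rightarrow> 'a) \<Rightarrow> 'a \<Rightarrow> (real \<Rightarrow>\<^sub>C 'a) \<Rightarrow> real \<Rightarrow> 'a::banach" where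
  "weighted_picard L F w0 g t =
     exp (- 2 * L * max 0 t) *\<^sub>R (w0 + integral {0..max 0 t} (\<lambda>s. F s (exp (2 * L * s) *\<^sub>R g s)))"

lemma weighted_integrand_continuous:
  fixes F :: "real \<Rightarrow> 'a \<Rightarrow> 'a::banach"
  assumes "\<And>y T. continuous_on {0..T} y \<Longrightarrow> continuous_on {0..T} (\<lambda>s. F s (y s))"
  shows "continuous_on {0..T} (\<lambda>s. F s (exp (2 * L * s) *\<^sub>R apply_bcontfun g s))"
  by (rule assms, intro continuous_on_scaleR continuous_on_apply_bcontfun) (auto intro!: continuous_intros)

lemma weighted_picard_bcontfun:
  fixes F :: "real \<Rightarrow> 'a \<Rightarrow> 'a::banach"
  assumes L: "L > 0" and bound: "\<And>s u. s \<ge> 0 \<Longrightarrow> norm (F s u) \<le> M"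
    and cont: "\<And>y T. continuous_on {0..T} y \<Longrightarrow> continuous_on {0..T} (\<lambda>s. F s (y s))"
  shows "weighted_picard L F w0 g \<in> bcontfun"
proof (rule bcontfun_normI)
  define I where "I t = integral {0..t} (\<lambda>s. F s (exp (2 * L * s) *\<^sub>R apply_bcontfun g s))" for t
  have M: "M \<ge> 0" using bound[of 0] norm_ge_zero order_trans by blast
  have I_lip: "norm (I t - I t') \<le> M * \<bar>t - t'\<bar>" if "0 \<le> t" "0 \<le> t'" for t t'
    unfolding I_def using that bound
    using that bound weighted_integrand_continuous[OF cont] by (intro integral_from_zero_lipschitz) auto
  have "M-lipschitz_on UNIV (\<lambda>t. I (max 0 t))"
  proof (rule lipschitz_onI)
    fix x y :: real
    have "dist (I (max 0 x)) (I (max 0 y)) \<le> M * \<bar>max 0 x - max 0 y\<bar>"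
      unfolding dist_norm by (rule I_lip) auto
    also have "\<dots> \<le> M * dist x y" using M by (intro mult_left_mono) (auto simp: dist_real_def)
    finally show "dist (I (max 0 x)) (I (max 0 y)) \<le> M * dist x y" .
  qed (rule M)
  then have "continuous_on UNIV (\<lambda>t. I (max 0 t))" by (rule lipschitz_on_continuous_on)
  then show "continuous_on UNIV (weighted_picard L F w0 g)"
    unfolding weighted_picard_def I_def[symmetric] by (auto intro!: continuous_intros)
  fix t :: real
  define t' where "t' = max 0 t"
  have t': "t' \<ge> 0" unfolding t'_def by simp
  have "norm (weighted_picard L F w0 g t) = exp (- 2 * L * t') * norm (w0 + I t')"
    unfolding weighted_picard_def I_def t'_def by simp
  also have "\<dots> \<le> exp (- 2 * L * t') * (norm w0 + M * t')"
    using I_lip[of t' 0] t' by (intro mult_left_mono) (auto simp: I_def intro: norm_triangle_le)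
  also have "\<dots> \<le> norm w0 + M / (2 * L)"
  proof -
    have "exp (- 2 * L * t') * (M * t') \<le> M / (2 * L)"
    proof -
      have "M * (2 * L * t') \<le> M * exp (2 * L * t')"
        using exp_ge_add_one_self[of "2 * L * t'"] M by (intro mult_left_mono) linarith+
      then show ?thesis using L by (simp add: exp_minus field_simps)
    qed
    moreover have "exp (- 2 * L * t') * norm w0 \<le> norm w0" using L t' by (intro mult_left_le_one_le) auto
    ultimately show ?thesis by (simp add: distrib_left)
  qed
  finally show "norm (weighted_picard L F w0 g t) \<le> norm w0 + M / (2 * L)" .
qed

lemma weighted_picard_contraction:
  fixes F :: "real \<Rightarrow> 'a \<Rightarrow> 'a::banach"
  assumes L: "L > 0" and lip: "\<And>s u v. s \<ge> 0 \<Longrightarrow> norm (F s u - F s v) \<le> L * norm (u - v)"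
    and cont: "\<And>y T. continuous_on {0..T} y \<Longrightarrow> continuous_on {0..T} (\<lambda>s. F s (y s))"
    and t: "t \<ge> 0"
  shows "norm (weighted_picard L F w0 g1 t - weighted_picard L F w0 g2 t) \<le> 1/2 * dist g1 g2"
proof -
  define D where "D = dist g1 g2"
  define h where "h g s = F s (exp (2 * L * s) *\<^sub>R apply_bcontfun g s)" for g s
  have int: "h g integrable_on {0..t}" for g
    unfolding h_def by (rule integrable_continuous_interval, rule weighted_integrand_continuous[OF cont])
  have pointwise: "norm (h g1 s - h g2 s) \<le> L * D * exp (2 * L * s)" if "s \<in> {0..t}" for s
  proof -
    have "norm (h g1 s - h g2 s) \<le> L * (exp (2 * L * s) * dist (apply_bcontfun g1 s) (apply_bcontfun g2 s))"
    proof -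
      have "norm (h g1 s - h g2 s)
          \<le> L * norm (exp (2 * L * s) *\<^sub>R apply_bcontfun g1 s - exp (2 * L * s) *\<^sub>R apply_bcontfun g2 s)"
        unfolding h_def using lip that by auto
      then show ?thesis by (simp add: dist_norm flip: scaleR_diff_right)
    qed
    also have "\<dots> \<le> L * (exp (2 * L * s) * D)"
      unfolding D_def using L by (intro mult_left_mono dist_bounded) auto
    finally show ?thesis by (simp add: algebra_simps)
  qed
  have "((\<lambda>s. L * D * exp (2 * L * s)) has_integral (D / 2 * exp (2 * L * t) - D / 2 * exp (2 * L * 0))) {0..t}"
  proof (rule fundamental_theorem_of_calculus)
    fix x assume "x \<in> {0..t}"
    show "((\<lambda>s. D / 2 * exp (2 * L * s)) has_vector_derivative L * D * exp (2 * L * x)) (at x within {0..t})"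
      unfolding has_real_derivative_iff_has_vector_derivative[symmetric]
      by (auto intro!: derivative_eq_intros)
  qed (rule t)
  then have "norm (integral {0..t} (\<lambda>s. h g1 s - h g2 s)) \<le> D / 2 * exp (2 * L * t) - D / 2"
    using integral_norm_bound_integral[OF integrable_diff[OF int int] _ pointwise]
    by (simp add: has_integral_iff)
  then have "norm (weighted_picard L F w0 g1 t - weighted_picard L F w0 g2 t)
      \<le> exp (- 2 * L * t) * (D / 2 * exp (2 * L * t) - D / 2)"
    unfolding weighted_picard_def h_def[symmetric] using t int
    by (simp add: integral_diff flip: scaleR_diff_right)
  also have "\<dots> \<le> 1/2 * D" unfolding D_def by (simp add: algebra_simps mult_exp_exp)
  finally show ?thesis unfolding D_def .
qed

lemma global_solution_exists:
  fixes F :: "real \<Rightarrow> 'a \<Rightarrow> 'a::banach"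
  assumes L: "L > 0" and bound: "\<And>s u. s \<ge> 0 \<Longrightarrow> norm (F s u) \<le> M"
    and lip: "\<And>s u v. s \<ge> 0 \<Longrightarrow> norm (F s u - F s v) \<le> L * norm (u - v)"
    and cont: "\<And>y T. continuous_on {0..T} y \<Longrightarrow> continuous_on {0..T} (\<lambda>s. F s (y s))"
  shows "\<exists>w. w 0 = w0 \<and> (\<forall>T. \<forall>t\<in>{0..T}. (w has_vector_derivative F t (w t)) (at t within {0..T}))"
proof -
  define \<Phi> where "\<Phi> g = Bcontfun (weighted_picard L F w0 g)" for g
  have \<Phi>: "apply_bcontfun (\<Phi> g) = weighted_picard L F w0 g" for g
    unfolding \<Phi>_def using weighted_picard_bcontfun[OF L bound cont] by (simp add: Bcontfun_inverse)
  have "dist (\<Phi> g1) (\<Phi> g2) \<le> 1/2 * dist g1 g2" for g1 g2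
  proof (rule dist_bound)
    fix t :: real
    have "weighted_picard L F w0 g t = weighted_picard L F w0 g (max 0 t)" for g
      unfolding weighted_picard_def by simp
    then show "dist (apply_bcontfun (\<Phi> g1) t) (apply_bcontfun (\<Phi> g2) t) \<le> 1/2 * dist g1 g2"
      unfolding \<Phi> dist_norm[of "weighted_picard L F w0 g1 t"]
      using weighted_picard_contraction[OF L lip cont, of "max 0 t" w0 g1 g2] by simp
  qed
  then obtain g where g: "\<Phi> g = g" using banach_fix_type[of "1/2" \<Phi>] by auto
  define I where "I = (\<lambda>t. integral {0..t} (\<lambda>s. F s (exp (2 * L * s) *\<^sub>R apply_bcontfun g s)))"
  define w where "w t = w0 + I t" for t
  have g_w: "exp (2 * L * s) *\<^sub>R apply_bcontfun g s = w s" if "s \<ge> 0" for s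
  proof -
    have "apply_bcontfun g s = weighted_picard L F w0 g s" using \<Phi>[of g] g by simp
    then show ?thesis unfolding weighted_picard_def w_def I_def using that by (simp add: mult_exp_exp)
  qed
  show ?thesis
  proof (intro exI conjI allI ballI)
    show "w 0 = w0" unfolding w_def I_def by simp
    fix T t :: real assume t: "t \<in> {0..T}"
    have "(I has_vector_derivative F t (exp (2 * L * t) *\<^sub>R apply_bcontfun g t)) (at t within {0..T})"
      unfolding I_def by (rule integral_has_vector_derivative[OF weighted_integrand_continuous[OF cont] t])
    then show "(w has_vector_derivative F t (w t)) (at t within {0..T})"
      using g_w[of t] t unfolding w_def by (auto intro!: derivative_eq_intros)
  qed
qed

definition box_clamp :: "real^'n \<Rightarrow> real \<Rightarrow> real^'n \<Rightarrow> real^'n" where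
  "box_clamp c \<rho> y = (\<chi> i. max (c$i - \<rho>) (min (c$i + \<rho>) (y$i)))"

lemma box_clamp_nonexpansive:
  assumes "\<rho> \<ge> 0"
  shows "norm (box_clamp c \<rho> y - box_clamp c \<rho> y') \<le> norm (y - y')"
  using assms by (intro norm_le_componentwise_cart) (auto simp: box_clamp_def max_def min_def)

lemma box_clamp_near_centre:
  fixes c y :: "real^'n" and \<rho> :: real
  assumes "\<rho> \<ge> 0"
  shows "norm (box_clamp c \<rho> y - c) \<le> CARD('n) * \<rho>"
proof -
  have "norm (box_clamp c \<rho> y - c) \<le> (\<Sum>i\<in>(UNIV :: 'n set). \<bar>(box_clamp c \<rho> y - c)$i\<bar>)"
    by (rule norm_le_l1_cart)
  also have "\<dots> \<le> (\<Sum>i\<in>(UNIV :: 'n set). \<rho>)"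
    using assms by (intro sum_mono) (auto simp: box_clamp_def max_def min_def)
  finally show ?thesis by simp
qed

lemma box_clamp_eq_self:
  assumes "norm (y - c) \<le> \<rho>"
  shows "box_clamp c \<rho> y = y"
proof -
  have bound: "\<bar>(y - c)$i\<bar> \<le> \<rho>" for i using component_le_norm_cart[of "y - c" i] assms by linarith
  have "max (c$i - \<rho>) (min (c$i + \<rho>) (y$i)) = y$i" for i
    using bound[of i] by (auto simp: max_def min_def abs_le_iff)
  then show ?thesis by (simp add: box_clamp_def vec_eq_iff)
qed

lemma continuous_on_box_clamp: "\<rho> \<ge> 0 \<Longrightarrow> continuous_on S (box_clamp c \<rho>)"
  by (rule lipschitz_on_continuous_on[of 1])
    (auto intro!: lipschitz_onI simp: dist_norm box_clamp_nonexpansive)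

section \<open>The relative-coordinate system\<close>

lemma rel_norm_nonneg: "rel_norm N f \<ge> 0"
  unfolding rel_norm_def by (intro real_sqrt_ge_zero sum_nonneg) simp

lemma norm_le_rel_norm: "j \<in> {2..N} \<Longrightarrow> norm (f j) \<le> rel_norm N f"
  unfolding rel_norm_def by (intro real_le_rsqrt member_le_sum) auto

lemma rel_norm_cong: "(\<And>j. j \<in> {2..N} \<Longrightarrow> f j = g j) \<Longrightarrow> rel_norm N f = rel_norm N g"
  unfolding rel_norm_def by (intro arg_cong[where f = sqrt] sum.cong) auto

lemma rel_norm_Suc:
  assumes "N \<ge> 1"
  shows "rel_norm (Suc N) f = sqrt ((rel_norm N f)\<^sup>2 + (norm (f (Suc N)))\<^sup>2)"
proof -
  have "{2..Suc N} = insert (Suc N) {2..N}" using assms by auto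
  moreover have "(rel_norm N f)\<^sup>2 = (\<Sum>j\<in>{2..N}. (norm (f j))\<^sup>2)"
    unfolding rel_norm_def by (intro real_sqrt_pow2 sum_nonneg) simp
  ultimately show ?thesis unfolding rel_norm_def by simp
qed

lemma rel_norm_le_Suc: "N \<ge> 1 \<Longrightarrow> rel_norm N f \<le> rel_norm (Suc N) f"
  by (simp add: rel_norm_Suc real_le_rsqrt)

lemma rel_norm_Suc_le: "N \<ge> 1 \<Longrightarrow> rel_norm (Suc N) f \<le> rel_norm N f + norm (f (Suc N))"
  unfolding rel_norm_Suc by (rule real_le_lsqrt) (auto simp: rel_norm_nonneg power2_sum)

lemma rel_field_cong:
  assumes "\<And>i. i \<in> {2..n} \<Longrightarrow> \<zeta> i = \<zeta>' i" and "j \<in> {1..n}"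
  shows "rel_field n E isd k ps \<zeta> j = rel_field n E isd k ps \<zeta>' j"
proof -
  have "conf_of \<zeta> i = conf_of \<zeta>' i" if "i \<in> {1..n}" for i
    using assms that by (cases "i = 1") (auto simp: conf_of_def)
  then have "control n E isd k ps (conf_of \<zeta>) i = control n E isd k ps (conf_of \<zeta>') i"
    if "i \<in> {1..n}" for i
    unfolding control_def using that by (intro sum.cong) auto
  then show ?thesis unfolding rel_field_def using assms(2) by simp
qed

lemma is_solution_cong:
  assumes "\<And>s i. i \<in> {2..n} \<Longrightarrow> x s i = x' s i"
  shows "is_solution n E isd k ps x T = is_solution n E isd k ps x' T"
proof -
  have "(\<lambda>s. x s j) = (\<lambda>s. x' s j)" "rel_field n E isd k ps (x t) j = rel_field n E isd k ps (x' t) j"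
    if "j \<in> {2..n}" for t j
    using assms that rel_field_cong[of n "x t" "x' t" j] by auto
  then show ?thesis unfolding is_solution_def by auto
qed

lemma solution_component_continuous:
  assumes "is_solution n E isd k ps x T" "j \<in> {2..n}"
  shows "continuous_on {0..T} (\<lambda>s. x s j)"
  using assms unfolding is_solution_def
  by (intro continuous_on_vector_derivative[where f' = "\<lambda>t. rel_field n E isd k ps (x t) j"]) auto

definition solutions_exist ::
  "nat \<Rightarrow> (nat \<times> nat) set \<Rightarrow> (nat \<Rightarrow> bool) \<Rightarrow> (nat \<times> nat \<Rightarrow> real) \<Rightarrow> (nat \<Rightarrow> pt) \<Rightarrow> real \<Rightarrow> bool"
  where
  "solutions_exist n E isd k ps \<delta> \<longleftrightarrow>
     (\<forall>x0. rel_norm n (\<lambda>j. x0 j - rel_star ps j) < \<delta> \<longrightarrow>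
        (\<exists>x. (\<forall>j\<in>{2..n}. x 0 j = x0 j) \<and> (\<forall>T\<ge>0. is_solution n E isd k ps x T)))"

definition solutions_decay ::
  "nat \<Rightarrow> (nat \<times> nat) set \<Rightarrow> (nat \<Rightarrow> bool) \<Rightarrow> (nat \<times> nat \<Rightarrow> real) \<Rightarrow> (nat \<Rightarrow> pt)
     \<Rightarrow> real \<Rightarrow> real \<Rightarrow> real \<Rightarrow> bool"
  where
  "solutions_decay n E isd k ps \<delta> c r \<longleftrightarrow>
     (\<forall>x0 x T. rel_norm n (\<lambda>j. x0 j - rel_star ps j) < \<delta> \<longrightarrow> T \<ge> 0 \<longrightarrow>
        is_solution n E isd k ps x T \<longrightarrow> (\<forall>j\<in>{2..n}. x 0 j = x0 j) \<longrightarrow>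
        (\<forall>t\<in>{0..T}. rel_norm n (\<lambda>j. x t j - rel_star ps j)
           \<le> c * rel_norm n (\<lambda>j. x0 j - rel_star ps j) * exp (- r * t)))"

lemma loc_exp_stable_iff:
  "loc_exp_stable n E isd k ps \<longleftrightarrow>
     (\<exists>\<delta>>0. \<exists>c>0. \<exists>r>0. solutions_exist n E isd k ps \<delta> \<and> solutions_decay n E isd k ps \<delta> c r)"
  unfolding loc_exp_stable_def solutions_exist_def solutions_decay_def
  by (intro ex_cong1 conj_cong refl) blast

section \<open>Merging a new agent\<close>

locale formation_merge =
  fixes n :: nat and E :: "(nat \<times> nat) set" and isd :: "nat \<Rightarrow> bool"
    and k :: "nat \<times> nat \<Rightarrow> real" and ps :: "nat \<Rightarrow> pt"
    and d :: bool and kl kl1 :: real and q :: pt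
  assumes n2: "n \<ge> 2"
    and E_sub: "E \<subseteq> {(i, j). i \<in> {1..n} \<and> j \<in> {1..n} \<and> i \<noteq> j}"
    and k_pos: "\<forall>e\<in>E. k e > 0"
    and ps_distinct: "inj_on ps {1..n}"
    and kl_pos: "kl > 0" and kl1_pos: "kl1 > 0"
    and noncol: "\<not> collinear {ps 1, ps 2, q}"
begin

abbreviation "m \<equiv> Suc n"
abbreviation "E' \<equiv> E \<union> {(Suc n, 1), (Suc n, 2)}"
abbreviation "isd' \<equiv> isd(Suc n := d)"
abbreviation "k' \<equiv> k((Suc n, 1) := kl, (Suc n, 2) := kl1)"
abbreviation "ps' \<equiv> ps(Suc n := q)"

abbreviation "zs1 \<equiv> ps 1 - q"
abbreviation "zs2 \<equiv> ps 2 - q"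
abbreviation "new_star \<equiv> q - ps 1"

abbreviation old_error :: "(nat \<Rightarrow> pt) \<Rightarrow> real" where
  "old_error \<zeta> \<equiv> rel_norm n (\<lambda>j. \<zeta> j - rel_star ps j)"

abbreviation merged_error :: "(nat \<Rightarrow> pt) \<Rightarrow> real" where
  "merged_error \<zeta> \<equiv> rel_norm m (\<lambda>j. \<zeta> j - rel_star ps' j)"

lemma det2_new_edges: "det2 zs1 zs2 \<noteq> 0"
  using det2_nonzero_if_not_collinear[OF noncol] .

lemma zs1_nonzero: "zs1 \<noteq> 0" and zs2_nonzero: "zs2 \<noteq> 0"
  using det2_new_edges unfolding det2_def by auto

lemma E_mem: "(i, j) \<in> E \<Longrightarrow> i \<in> {1..n} \<and> j \<in> {1..n} \<and> i \<noteq> j"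
  using E_sub by auto

definition leader_input :: "(nat \<Rightarrow> pt) \<Rightarrow> pt" where
  "leader_input \<zeta> = control n E isd k ps (conf_of \<zeta>) 1"

definition new_field :: "(nat \<Rightarrow> pt) \<Rightarrow> pt" where
  "new_field \<zeta> = edge_term d kl (- \<zeta> m) zs1 + edge_term d kl1 (\<zeta> 2 - \<zeta> m) zs2 - leader_input \<zeta>"

text \<open>The new agent's input as a function of its own error when agents 1 and 2 sit
  at their desired relative positions.\<close>
definition new_edges_field :: "pt \<Rightarrow> pt" where
  "new_edges_field e = edge_term d kl (zs1 - e) zs1 + edge_term d kl1 (zs2 - e) zs2"

lemma control_merged_old:
  assumes "i \<in> {1..n}"
  shows "control m E' isd' k' ps' p i = control n E isd k ps p i"
proof -
  have "{1..Suc n} = insert (Suc n) {1..n}" by auto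
  moreover have "(i, Suc n) \<notin> E'" using assms E_mem[of i "Suc n"] by auto
  ultimately show ?thesis
    unfolding control_def using assms by (auto intro!: sum.cong simp: E_mem)
qed

lemma control_merged_new:
  "control m E' isd' k' ps' p m =
     edge_term d kl (p 1 - p m) zs1 + edge_term d kl1 (p 2 - p m) zs2"
proof -
  have "(if (m, j) \<in> E' then edge_term (isd' m) (k' (m, j)) (p j - p m) (ps' j - ps' m) else 0)
     = (if j = 1 then edge_term d kl (p 1 - p m) zs1 else 0)
       + (if j = 2 then edge_term d kl1 (p 2 - p m) zs2 else 0)" for j
    using E_mem[of m j] n2 by auto
  then show ?thesis unfolding control_def using n2 by (simp add: sum.distrib)
qed

lemma rel_field_merged_old:
  "j \<in> {1..n} \<Longrightarrow> rel_field m E' isd' k' ps' \<zeta> j = rel_field n E isd k ps \<zeta> j"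
  unfolding rel_field_def using control_merged_old[of j] control_merged_old[of 1] n2 by auto

lemma rel_field_merged_new: "rel_field m E' isd' k' ps' \<zeta> m = new_field \<zeta>"
  unfolding rel_field_def new_field_def leader_input_def
  using control_merged_old[of 1] n2 control_merged_new by (simp add: conf_of_def)

lemma is_solution_merged_iff:
  "is_solution m E' isd' k' ps' x T \<longleftrightarrow>
     is_solution n E isd k ps x T \<and>
     (\<forall>t\<in>{0..T}. ((\<lambda>s. x s m) has_vector_derivative new_field (x t)) (at t within {0..T}))"
proof -
  have "{2..Suc n} = insert (Suc n) {2..n}" using n2 by auto
  then show ?thesis
    unfolding is_solution_def using rel_field_merged_old rel_field_merged_new
    by (auto simp del: atLeastAtMost_iff) (simp_all add: atLeastAtMost_iff)
qed

lemma rel_star_merged_old: "j \<in> {1..n} \<Longrightarrow> rel_star ps' j = rel_star ps j"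
  unfolding rel_star_def by auto

lemma rel_star_merged_new: "rel_star ps' m = new_star"
  unfolding rel_star_def using n2 by simp

lemma old_error_merged: "rel_norm n (\<lambda>j. \<zeta> j - rel_star ps' j) = old_error \<zeta>"
  using rel_star_merged_old by (intro rel_norm_cong) auto

lemma merged_error_le:
  "merged_error \<zeta> \<le> old_error \<zeta> + norm (\<zeta> m - new_star)"
  using rel_norm_Suc_le[of n "\<lambda>j. \<zeta> j - rel_star ps' j"] n2
  by (simp add: old_error_merged rel_star_merged_new)

lemma old_error_le_merged: "old_error \<zeta> \<le> merged_error \<zeta>"
  using rel_norm_le_Suc[of n "\<lambda>j. \<zeta> j - rel_star ps' j"] n2 by (simp add: old_error_merged)

lemma new_error_le_merged: "norm (\<zeta> m - new_star) \<le> merged_error \<zeta>"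
  using norm_le_rel_norm[of m m "\<lambda>j. \<zeta> j - rel_star ps' j"] n2
  by (simp add: rel_star_merged_new)

definition leader_edge :: "nat \<Rightarrow> pt \<Rightarrow> pt" where
  "leader_edge j z = (if (1, j) \<in> E then edge_term (isd 1) (k (1, j)) z (ps j - ps 1) else 0)"

lemma leader_input_eq: "leader_input \<zeta> = (\<Sum>j\<in>{2..n}. leader_edge j (\<zeta> j))"
proof -
  have "leader_input \<zeta> = (\<Sum>j\<in>{1..n}. leader_edge j (\<zeta> j))"
    unfolding leader_input_def control_def leader_edge_def
    by (intro sum.cong refl) (auto simp: conf_of_def dest: E_mem)
  also have "\<dots> = (\<Sum>j\<in>{2..n}. leader_edge j (\<zeta> j))"
    using n2 by (subst sum.atLeast_Suc_atMost) (auto simp: leader_edge_def numeral_2_eq_2 dest: E_mem)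
  finally show ?thesis .
qed

lemma leader_input_cong: "(\<And>j. j \<in> {2..n} \<Longrightarrow> \<zeta> j = \<zeta>' j) \<Longrightarrow> leader_input \<zeta> = leader_input \<zeta>'"
  unfolding leader_input_eq by (intro sum.cong) auto

lemma old_desired_nonzero: "j \<in> {2..n} \<Longrightarrow> ps j - ps 1 \<noteq> 0"
  using ps_distinct n2 unfolding inj_on_def by fastforce

lemma leader_edge_at_desired: "j \<in> {2..n} \<Longrightarrow> leader_edge j (ps j - ps 1) = 0"
  unfolding leader_edge_def using old_desired_nonzero by (simp add: edge_term_at_desired)

lemma leader_edge_lipschitz:
  assumes "j \<in> {2..n}"
  obtains L where "L-lipschitz_on (cball (ps j - ps 1) (norm (ps j - ps 1) / 2)) (leader_edge j)"
proof (cases "(1, j) \<in> E")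
  case True
  then show ?thesis
    using edge_term_lipschitz[OF old_desired_nonzero[OF assms], of "k (1, j)" "isd 1"] k_pos True that
    unfolding leader_edge_def by auto
next
  case False
  then show ?thesis using that[of 0] lipschitz_on_constant unfolding leader_edge_def by auto
qed


definition leader_radius :: real where
  "leader_radius = Min ((\<lambda>j. norm (ps j - ps 1) / 2) ` {2..n})"

lemma leader_radius_pos: "leader_radius > 0"
  unfolding leader_radius_def using n2 old_desired_nonzero by (subst Min_gr_iff) auto

lemma component_in_half_cball:
  assumes "old_error \<zeta> \<le> leader_radius" and j: "j \<in> {2..n}"
  shows "\<zeta> j \<in> cball (ps j - ps 1) (norm (ps j - ps 1) / 2)"
proof -
  have "norm (\<zeta> j - rel_star ps j) \<le> old_error \<zeta>" using norm_le_rel_norm[OF j] .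
  moreover have "leader_radius \<le> norm (ps j - ps 1) / 2"
    unfolding leader_radius_def using j by (intro Min_le) auto
  ultimately show ?thesis using assms(1) by (simp add: dist_norm rel_star_def norm_minus_commute)
qed

lemma leader_input_linear_bound:
  obtains LU where "LU \<ge> 0"
    "\<And>\<zeta>. old_error \<zeta> \<le> leader_radius \<Longrightarrow> norm (leader_input \<zeta>) \<le> LU * old_error \<zeta>"
proof -
  have "\<forall>j\<in>{2..n}. \<exists>L. L-lipschitz_on (cball (ps j - ps 1) (norm (ps j - ps 1) / 2)) (leader_edge j)"
    using leader_edge_lipschitz by metis
  then obtain Lf where Lf: "\<And>j. j \<in> {2..n} \<Longrightarrow>
      (Lf j)-lipschitz_on (cball (ps j - ps 1) (norm (ps j - ps 1) / 2)) (leader_edge j)"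
    by metis
  show ?thesis
  proof (rule that)
    show "(\<Sum>j\<in>{2..n}. Lf j) \<ge> 0" using Lf lipschitz_on_nonneg by (meson sum_nonneg)
    fix \<zeta> assume near: "old_error \<zeta> \<le> leader_radius"
    have "norm (leader_input \<zeta>) \<le> (\<Sum>j\<in>{2..n}. norm (leader_edge j (\<zeta> j)))"
      unfolding leader_input_eq by (rule norm_sum)
    also have "\<dots> \<le> (\<Sum>j\<in>{2..n}. Lf j * old_error \<zeta>)"
    proof (rule sum_mono)
      fix j assume j: "j \<in> {2..n}"
      have "norm (leader_edge j (\<zeta> j)) = norm (leader_edge j (\<zeta> j) - leader_edge j (ps j - ps 1))"
        using leader_edge_at_desired[OF j] by simp
      also have "\<dots> \<le> Lf j * norm (\<zeta> j - (ps j - ps 1))"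
        by (rule lipschitz_on_normD[OF Lf[OF j] component_in_half_cball[OF near j]]) simp
      also have "\<dots> \<le> Lf j * old_error \<zeta>"
        using norm_le_rel_norm[OF j, of "\<lambda>j. \<zeta> j - rel_star ps j"] lipschitz_on_nonneg[OF Lf[OF j]]
        by (intro mult_left_mono) (auto simp: rel_star_def)
      finally show "norm (leader_edge j (\<zeta> j)) \<le> Lf j * old_error \<zeta>" .
    qed
    also have "\<dots> = (\<Sum>j\<in>{2..n}. Lf j) * old_error \<zeta>" by (simp add: sum_distrib_right)
    finally show "norm (leader_input \<zeta>) \<le> (\<Sum>j\<in>{2..n}. Lf j) * old_error \<zeta>" .
  qed
qed

lemma leader_input_continuous:
  assumes cont: "\<And>j. j \<in> {2..n} \<Longrightarrow> continuous_on S (\<lambda>s. x s j)"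
    and near: "\<And>s. s \<in> S \<Longrightarrow> old_error (x s) \<le> leader_radius"
  shows "continuous_on S (\<lambda>s. leader_input (x s))"
  unfolding leader_input_eq
proof (rule continuous_on_sum)
  fix j assume j: "j \<in> {2..n}"
  obtain L where "L-lipschitz_on (cball (ps j - ps 1) (norm (ps j - ps 1) / 2)) (leader_edge j)"
    using leader_edge_lipschitz[OF j] .
  then show "continuous_on S (\<lambda>s. leader_edge j (x s j))"
    by (rule continuous_on_compose2[OF lipschitz_on_continuous_on cont[OF j]])
      (use near component_in_half_cball[OF _ j] in auto)
qed

lemma new_field_perturbation:
  obtains P where "P \<ge> 0"
    "\<And>\<zeta>. old_error \<zeta> \<le> min leader_radius (norm zs2 / 4) \<Longrightarrow> norm (\<zeta> m - new_star) \<le> norm zs2 / 4 \<Longrightarrow>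
       norm (new_field \<zeta> - new_edges_field (\<zeta> m - new_star)) \<le> P * old_error \<zeta>"
proof -
  obtain LU where LU: "LU \<ge> 0"
    and leader: "\<And>\<zeta>. old_error \<zeta> \<le> leader_radius \<Longrightarrow> norm (leader_input \<zeta>) \<le> LU * old_error \<zeta>"
    using leader_input_linear_bound by blast
  obtain L2 where L2: "L2-lipschitz_on (cball zs2 (norm zs2 / 2)) (\<lambda>z. edge_term d kl1 z zs2)"
    using edge_term_lipschitz[OF zs2_nonzero kl1_pos] by blast
  show ?thesis
  proof (rule that)
    show "L2 + LU \<ge> 0" using LU lipschitz_on_nonneg[OF L2] by simp
    fix \<zeta> assume old: "old_error \<zeta> \<le> min leader_radius (norm zs2 / 4)"
      and new: "norm (\<zeta> m - new_star) \<le> norm zs2 / 4"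
    define e where "e = \<zeta> m - new_star"
    define \<delta>2 where "\<delta>2 = \<zeta> 2 - rel_star ps 2"
    have \<delta>2: "norm \<delta>2 \<le> old_error \<zeta>" unfolding \<delta>2_def using norm_le_rel_norm[of 2 n] n2 by simp
    have split: "new_field \<zeta> - new_edges_field e
        = (edge_term d kl1 (zs2 - e + \<delta>2) zs2 - edge_term d kl1 (zs2 - e) zs2) - leader_input \<zeta>"
      unfolding new_field_def new_edges_field_def e_def \<delta>2_def rel_star_def by (simp add: algebra_simps)
    have e: "norm e \<le> norm zs2 / 4" using new unfolding e_def .
    have dists: "dist zs2 (zs2 - e + \<delta>2) = norm (e - \<delta>2)" "dist zs2 (zs2 - e) = norm e"
      by (simp_all add: dist_norm)
    have in_ball: "zs2 - e + \<delta>2 \<in> cball zs2 (norm zs2 / 2)" "zs2 - e \<in> cball zs2 (norm zs2 / 2)"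
    proof -
      have "norm (e - \<delta>2) \<le> norm zs2 / 2" using e old \<delta>2 norm_triangle_ineq4[of e \<delta>2] by linarith
      moreover have "norm e \<le> norm zs2 / 2" using e norm_ge_zero[of zs2] by linarith
      ultimately show "zs2 - e + \<delta>2 \<in> cball zs2 (norm zs2 / 2)" "zs2 - e \<in> cball zs2 (norm zs2 / 2)"
        using dists by auto
    qed
    have "norm (new_field \<zeta> - new_edges_field e)
        \<le> norm (edge_term d kl1 (zs2 - e + \<delta>2) zs2 - edge_term d kl1 (zs2 - e) zs2) + norm (leader_input \<zeta>)"
      unfolding split by (rule norm_triangle_ineq4)
    also have "\<dots> \<le> L2 * norm \<delta>2 + LU * old_error \<zeta>"
      using lipschitz_on_normD[OF L2 in_ball] leader[of \<zeta>] old by (intro add_mono) auto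
    also have "\<dots> \<le> (L2 + LU) * old_error \<zeta>"
      using \<delta>2 lipschitz_on_nonneg[OF L2] by (simp add: distrib_right mult_left_mono)
    finally show "norm (new_field \<zeta> - new_edges_field (\<zeta> m - new_star)) \<le> (L2 + LU) * old_error \<zeta>"
      unfolding e_def .
  qed
qed

end

locale merge_estimates = formation_merge +
  fixes c K P \<delta>0 c0 r0 :: real
  assumes c_pos: "c > 0" and K_nonneg: "K \<ge> 0" and P_nonneg: "P \<ge> 0"
    and descent: "\<And>e. norm e \<le> min (norm zs1) (norm zs2) / 2 \<Longrightarrow>
                    e \<bullet> new_edges_field e \<le> - c * (norm e)\<^sup>2 + K * norm e ^ 3"
    and perturbation: "\<And>\<zeta>. old_error \<zeta> \<le> min leader_radius (norm zs2 / 4) \<Longrightarrow>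
                         norm (\<zeta> m - new_star) \<le> norm zs2 / 4 \<Longrightarrow>
                         norm (new_field \<zeta> - new_edges_field (\<zeta> m - new_star)) \<le> P * old_error \<zeta>"
    and \<delta>0_pos: "\<delta>0 > 0" and c0_pos: "c0 > 0" and r0_pos: "r0 > 0"
    and old_exist: "solutions_exist n E isd k ps \<delta>0"
    and old_decay: "solutions_decay n E isd k ps \<delta>0 c0 r0"
begin

definition old_radius :: real where
  "old_radius = min leader_radius (norm zs2 / 4)"

definition new_radius :: real where
  "new_radius = min (min (norm zs1) (norm zs2) / 8) (c / (2 * K + 2))"

text \<open>Squared new error, relative to the initial merged error, that the transient
  forced by the old agents can produce.\<close>
definition overshoot :: real where
  "overshoot = 1 + 2 * P\<^sup>2 * c0\<^sup>2 / (c * r0)"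

definition new_rate :: real where
  "new_rate = min (c / 2) (2 * r0) / 2"

definition init_radius :: real where
  "init_radius = min \<delta>0 (min (old_radius / c0) (new_radius / sqrt overshoot))"

lemma old_radius_pos: "old_radius > 0"
  unfolding old_radius_def using leader_radius_pos zs2_nonzero by simp

lemma new_radius_pos: "new_radius > 0"
  unfolding new_radius_def using zs1_nonzero zs2_nonzero c_pos K_nonneg by simp

lemma new_radius_le: "new_radius \<le> c / (2 * K + 2)" "new_radius \<le> norm zs1 / 8" "new_radius \<le> norm zs2 / 8"
  unfolding new_radius_def by (auto simp: min_def)

lemma overshoot_ge_1: "overshoot \<ge> 1"
  unfolding overshoot_def using c_pos r0_pos by simp

lemma new_rate_pos: "new_rate > 0"
  unfolding new_rate_def using c_pos r0_pos by simp

lemma init_radius_pos: "init_radius > 0"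
  unfolding init_radius_def using \<delta>0_pos c0_pos old_radius_pos new_radius_pos overshoot_ge_1 by simp

lemma overshoot_small:
  assumes "merged_error x0 < init_radius"
  shows "overshoot * (merged_error x0)\<^sup>2 < new_radius\<^sup>2"
proof -
  have "merged_error x0 < new_radius / sqrt overshoot" using assms unfolding init_radius_def by simp
  then have "sqrt overshoot * merged_error x0 < new_radius" using overshoot_ge_1 by (simp add: field_simps)
  then have "(sqrt overshoot * merged_error x0)\<^sup>2 < new_radius\<^sup>2"
    using overshoot_ge_1 rel_norm_nonneg[of m] by (intro power_strict_mono) auto
  then show ?thesis using overshoot_ge_1 by (simp add: power_mult_distrib)
qed

lemma old_error_along_solution:
  assumes x0: "merged_error x0 < init_radius" and T: "T \<ge> 0"
    and sol: "is_solution n E isd k ps x T" and init: "\<forall>j\<in>{2..n}. x 0 j = x0 j"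
    and t: "t \<in> {0..T}"
  shows "old_error (x t) \<le> c0 * merged_error x0 * exp (- r0 * t)"
    and "old_error (x t) \<le> old_radius"
proof -
  have "old_error x0 < \<delta>0" using old_error_le_merged[of x0] x0 unfolding init_radius_def by linarith
  then have "old_error (x t) \<le> c0 * old_error x0 * exp (- r0 * t)"
    using old_decay T sol init t unfolding solutions_decay_def by blast
  also have "\<dots> \<le> c0 * merged_error x0 * exp (- r0 * t)"
    using old_error_le_merged[of x0] c0_pos by (intro mult_right_mono mult_left_mono) auto
  finally show decay: "old_error (x t) \<le> c0 * merged_error x0 * exp (- r0 * t)" .
  have "c0 * merged_error x0 * exp (- r0 * t) \<le> c0 * merged_error x0"
    using c0_pos r0_pos t rel_norm_nonneg[of m] by (intro mult_left_le) auto
  also have "\<dots> \<le> old_radius"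
    using x0 c0_pos unfolding init_radius_def by (simp add: field_simps)
  finally show "old_error (x t) \<le> old_radius" using decay by linarith
qed

lemma new_error_decay:
  assumes x0: "merged_error x0 < init_radius" and T: "T \<ge> 0"
    and sol: "is_solution n E isd k ps x T" and init: "\<forall>j\<in>{2..n}. x 0 j = x0 j"
    and der: "\<And>t. t \<in> {0..T} \<Longrightarrow> (w has_vector_derivative W t) (at t within {0..T})"
    and w0: "w 0 = x0 m"
    and field: "\<And>t. t \<in> {0..T} \<Longrightarrow> norm (w t - new_star) \<le> new_radius \<Longrightarrow> W t = new_field ((x t)(m := w t))"
    and t: "t \<in> {0..T}"
  shows "(norm (w t - new_star))\<^sup>2 \<le> overshoot * (merged_error x0)\<^sup>2 * exp (- new_rate * t)"
proof -
  define \<epsilon> where "\<epsilon> = merged_error x0"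
  have \<epsilon>: "\<epsilon> \<ge> 0" unfolding \<epsilon>_def by (rule rel_norm_nonneg)
  have init_new: "norm (w 0 - new_star) \<le> \<epsilon>" unfolding w0 \<epsilon>_def by (rule new_error_le_merged)
  have tail: "(norm (w 0 - new_star))\<^sup>2 + 2 * (P * c0 * \<epsilon>)\<^sup>2 / (c * r0) \<le> overshoot * \<epsilon>\<^sup>2"
    using power_mono[OF init_new] unfolding overshoot_def by (simp add: power_mult_distrib field_simps)
  have "(norm (w t - new_star))\<^sup>2
      \<le> ((norm (w 0 - new_star))\<^sup>2 + 2 * (P * c0 * \<epsilon>)\<^sup>2 / (c * r0)) * exp (- new_rate * t)"
    unfolding new_rate_def
  proof (rule perturbed_descent_decay[OF c_pos K_nonneg _ new_radius_le(1) r0_pos _ der])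
    fix s assume s: "s \<in> {0..T}" and near: "norm (w s - new_star) \<le> new_radius"
    have old: "old_error ((x s)(m := w s)) = old_error (x s)" by (intro rel_norm_cong) auto
    have "norm (new_field ((x s)(m := w s)) - new_edges_field (w s - new_star)) \<le> P * old_error (x s)"
    proof -
      have "norm (w s - new_star) \<le> norm zs2 / 4"
        using near new_radius_le(3) norm_ge_zero[of zs2] by linarith
      then show ?thesis
        using perturbation[of "(x s)(m := w s)"] old_error_along_solution(2)[OF x0 T sol init s]
        unfolding old old_radius_def by simp
    qed
    then have "norm (W s - new_edges_field (w s - new_star)) \<le> P * old_error (x s)"
      using field[OF s near] by simp
    also have "\<dots> \<le> P * c0 * \<epsilon> * exp (- r0 * s)"
      using old_error_along_solution(1)[OF x0 T sol init s] P_nonneg unfolding \<epsilon>_def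
      by (simp add: mult_left_mono mult.assoc)
    finally show "norm (W s - new_edges_field (w s - new_star)) \<le> P * c0 * \<epsilon> * exp (- r0 * s)" .
  next
    fix e :: pt assume "norm e \<le> new_radius"
    then show "e \<bullet> new_edges_field e \<le> - c * (norm e)\<^sup>2 + K * norm e ^ 3"
      using new_radius_le new_radius_pos by (intro descent) auto
  next
    have "overshoot * \<epsilon>\<^sup>2 < new_radius\<^sup>2" unfolding \<epsilon>_def by (rule overshoot_small[OF x0])
    then show "(norm (w 0 - new_star))\<^sup>2 + 2 * (P * c0 * \<epsilon>)\<^sup>2 / (c * r0) < new_radius\<^sup>2"
      using tail by simp
  qed (use new_radius_pos P_nonneg c0_pos \<epsilon> t in auto)
  also have "\<dots> \<le> overshoot * \<epsilon>\<^sup>2 * exp (- new_rate * t)"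
    using tail by (intro mult_right_mono) auto
  finally show ?thesis unfolding \<epsilon>_def by simp
qed


lemma merged_solutions_decay:
  "solutions_decay m E' isd' k' ps' init_radius (c0 + sqrt overshoot) (min r0 (new_rate / 2))"
  unfolding solutions_decay_def
proof (intro allI impI ballI)
  fix x0 x T t
  assume x0: "merged_error x0 < init_radius" and T: "T \<ge> 0"
    and sol: "is_solution m E' isd' k' ps' x T" and init: "\<forall>j\<in>{2..m}. x 0 j = x0 j"
    and t: "t \<in> {0..T}"
  define \<epsilon> where "\<epsilon> = merged_error x0"
  have \<epsilon>: "\<epsilon> \<ge> 0" unfolding \<epsilon>_def by (rule rel_norm_nonneg)
  have old_sol: "is_solution n E isd k ps x T"
    and new_der: "\<And>t. t \<in> {0..T} \<Longrightarrow> ((\<lambda>s. x s m) has_vector_derivative new_field (x t)) (at t within {0..T})"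
    using sol unfolding is_solution_merged_iff by auto
  have old_init: "\<forall>j\<in>{2..n}. x 0 j = x0 j" using init by auto
  have "(norm (x t m - new_star))\<^sup>2 \<le> overshoot * \<epsilon>\<^sup>2 * exp (- new_rate * t)"
    unfolding \<epsilon>_def by (rule new_error_decay[OF x0 T old_sol old_init new_der _ _ t]) (use init n2 in auto)
  also have "\<dots> = (sqrt overshoot * \<epsilon> * exp (- (new_rate / 2) * t))\<^sup>2"
  proof -
    have "(exp (- (new_rate / 2) * t))\<^sup>2 = exp (- new_rate * t)"
      by (simp add: power2_eq_square flip: exp_add)
    then show ?thesis using overshoot_ge_1 by (simp add: power_mult_distrib)
  qed
  finally have new: "norm (x t m - new_star) \<le> sqrt overshoot * \<epsilon> * exp (- (new_rate / 2) * t)"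
    by (rule power2_le_imp_le) (use overshoot_ge_1 \<epsilon> in simp)
  have "merged_error (x t) \<le> old_error (x t) + norm (x t m - new_star)"
    by (rule merged_error_le)
  also have "\<dots> \<le> c0 * \<epsilon> * exp (- r0 * t) + sqrt overshoot * \<epsilon> * exp (- (new_rate / 2) * t)"
    using old_error_along_solution(1)[OF x0 T old_sol old_init t] new unfolding \<epsilon>_def by (rule add_mono)
  also have "\<dots> \<le> (c0 * \<epsilon> + sqrt overshoot * \<epsilon>) * exp (- min r0 (new_rate / 2) * t)"
    using c0_pos overshoot_ge_1 \<epsilon> t by (intro sum_of_exp_decays_le) auto
  finally show "merged_error (x t) \<le> (c0 + sqrt overshoot) * merged_error x0 * exp (- min r0 (new_rate / 2) * t)"
    unfolding \<epsilon>_def by (simp add: algebra_simps)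
qed

text \<open>To construct the new agent's trajectory, its field is made globally Lipschitz by
  clamping its argument to a box around the desired value. The decay estimate then
  shows that the clamp is never active.\<close>
definition clamped_new_field :: "(real \<Rightarrow> nat \<Rightarrow> pt) \<Rightarrow> real \<Rightarrow> pt \<Rightarrow> pt" where
  "clamped_new_field x s y = new_field ((x s)(m := box_clamp new_star new_radius y))"

lemma clamped_new_field_eq:
  "clamped_new_field x s y =
     edge_term d kl (- box_clamp new_star new_radius y) zs1
     + edge_term d kl1 (x s 2 - box_clamp new_star new_radius y) zs2 - leader_input (x s)"
proof -
  have "leader_input ((x s)(m := box_clamp new_star new_radius y)) = leader_input (x s)"
    by (intro leader_input_cong) auto
  then show ?thesis unfolding clamped_new_field_def new_field_def using n2 by simp
qed

lemma clamped_edge_arguments: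
  assumes "old_error (x s) \<le> old_radius"
  shows "- box_clamp new_star new_radius y \<in> cball zs1 (norm zs1 / 2)"
    and "x s 2 - box_clamp new_star new_radius y \<in> cball zs2 (norm zs2 / 2)"
proof -
  define y' where "y' = box_clamp new_star new_radius y"
  have "norm (y' - new_star) \<le> 2 * new_radius"
    unfolding y'_def using box_clamp_near_centre[of new_radius new_star y] new_radius_pos by simp
  then have y': "norm (y' - new_star) \<le> norm zs1 / 4" "norm (y' - new_star) \<le> norm zs2 / 4"
    using new_radius_le by auto
  have old2: "norm (x s 2 - rel_star ps 2) \<le> norm zs2 / 4"
    using norm_le_rel_norm[of 2 n "\<lambda>j. x s j - rel_star ps j"] n2 assms
    unfolding old_radius_def by simp
  have "dist zs1 (- y') = norm (y' - new_star)" by (simp add: dist_norm algebra_simps)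
  moreover have "norm (y' - new_star) \<le> norm zs1 / 2" using y'(1) norm_ge_zero[of zs1] by linarith
  ultimately show "- y' \<in> cball zs1 (norm zs1 / 2)" by simp
  have "dist zs2 (x s 2 - y') = norm ((y' - new_star) - (x s 2 - rel_star ps 2))"
    by (simp add: dist_norm rel_star_def algebra_simps)
  also have "\<dots> \<le> norm zs2 / 2" using y' old2 norm_triangle_ineq4[of "y' - new_star" "x s 2 - rel_star ps 2"] by linarith
  finally show "x s 2 - y' \<in> cball zs2 (norm zs2 / 2)" by simp
qed


lemma clamped_new_field_bounded:
  assumes near: "\<And>s. s \<ge> 0 \<Longrightarrow> old_error (x s) \<le> old_radius"
  shows "\<exists>M. \<forall>s\<ge>0. \<forall>y. norm (clamped_new_field x s y) \<le> M"
proof -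
  obtain L1 where L1: "L1-lipschitz_on (cball zs1 (norm zs1 / 2)) (\<lambda>z. edge_term d kl z zs1)"
    using edge_term_lipschitz[OF zs1_nonzero kl_pos] by blast
  obtain L2 where L2: "L2-lipschitz_on (cball zs2 (norm zs2 / 2)) (\<lambda>z. edge_term d kl1 z zs2)"
    using edge_term_lipschitz[OF zs2_nonzero kl1_pos] by blast
  obtain LU where LU: "LU \<ge> 0"
    and leader: "\<And>\<zeta>. old_error \<zeta> \<le> leader_radius \<Longrightarrow> norm (leader_input \<zeta>) \<le> LU * old_error \<zeta>"
    using leader_input_linear_bound by blast
  show ?thesis
  proof (intro exI allI impI)
    fix s :: real and y :: pt assume s: "s \<ge> 0"
    have "norm (leader_input (x s)) \<le> LU * old_radius"
      using leader[of "x s"] near[OF s] LU mult_left_mono[OF near[OF s] LU]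
      unfolding old_radius_def by simp
    then show "norm (clamped_new_field x s y) \<le> L1 * (norm zs1 / 2) + L2 * (norm zs2 / 2) + LU * old_radius"
      unfolding clamped_new_field_eq
      using lipschitz_on_cball_norm_le[OF L1 edge_term_at_desired[OF zs1_nonzero] clamped_edge_arguments(1)[of x s y, OF near[OF s]]]
        lipschitz_on_cball_norm_le[OF L2 edge_term_at_desired[OF zs2_nonzero] clamped_edge_arguments(2)[of x s y, OF near[OF s]]]
        norm_triangle_ineq4[of "edge_term d kl (- box_clamp new_star new_radius y) zs1
          + edge_term d kl1 (x s 2 - box_clamp new_star new_radius y) zs2" "leader_input (x s)"]
        norm_triangle_ineq[of "edge_term d kl (- box_clamp new_star new_radius y) zs1"
          "edge_term d kl1 (x s 2 - box_clamp new_star new_radius y) zs2"]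
      by linarith
  qed
qed

lemma clamped_new_field_lipschitz:
  assumes near: "\<And>s. s \<ge> 0 \<Longrightarrow> old_error (x s) \<le> old_radius"
  shows "\<exists>L>0. \<forall>s\<ge>0. \<forall>y y'.
           norm (clamped_new_field x s y - clamped_new_field x s y') \<le> L * norm (y - y')"
proof -
  obtain L1 where L1: "L1-lipschitz_on (cball zs1 (norm zs1 / 2)) (\<lambda>z. edge_term d kl z zs1)"
    using edge_term_lipschitz[OF zs1_nonzero kl_pos] by blast
  obtain L2 where L2: "L2-lipschitz_on (cball zs2 (norm zs2 / 2)) (\<lambda>z. edge_term d kl1 z zs2)"
    using edge_term_lipschitz[OF zs2_nonzero kl1_pos] by blast
  show ?thesis
  proof (intro exI conjI allI impI)
    show "L1 + L2 + 1 > 0" using lipschitz_on_nonneg[OF L1] lipschitz_on_nonneg[OF L2] by simp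
    fix s :: real and y y' :: pt assume s: "s \<ge> 0"
    define c where "c = box_clamp new_star new_radius"
    have clamp: "norm (c y - c y') \<le> norm (y - y')"
      unfolding c_def using new_radius_pos by (intro box_clamp_nonexpansive) simp
    have "clamped_new_field x s y - clamped_new_field x s y'
        = (edge_term d kl (- c y) zs1 - edge_term d kl (- c y') zs1)
          + (edge_term d kl1 (x s 2 - c y) zs2 - edge_term d kl1 (x s 2 - c y') zs2)"
      unfolding clamped_new_field_eq c_def[symmetric] by (simp add: algebra_simps)
    then have "norm (clamped_new_field x s y - clamped_new_field x s y')
        \<le> norm (edge_term d kl (- c y) zs1 - edge_term d kl (- c y') zs1)
          + norm (edge_term d kl1 (x s 2 - c y) zs2 - edge_term d kl1 (x s 2 - c y') zs2)"
      by (simp add: norm_triangle_ineq)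
    also have "\<dots> \<le> L1 * norm (c y - c y') + L2 * norm (c y - c y')"
      using lipschitz_on_normD[OF L1 clamped_edge_arguments(1)[of x s, OF near[OF s]] clamped_edge_arguments(1)[of x s, OF near[OF s]]]
        lipschitz_on_normD[OF L2 clamped_edge_arguments(2)[of x s, OF near[OF s]] clamped_edge_arguments(2)[of x s, OF near[OF s]]]
      unfolding c_def by (simp add: norm_minus_commute add_mono)
    also have "\<dots> \<le> (L1 + L2 + 1) * norm (y - y')"
      using mult_left_mono[OF clamp lipschitz_on_nonneg[OF L1]]
        mult_left_mono[OF clamp lipschitz_on_nonneg[OF L2]] norm_ge_zero[of "y - y'"]
      unfolding distrib_right by linarith
    finally show "norm (clamped_new_field x s y - clamped_new_field x s y') \<le> (L1 + L2 + 1) * norm (y - y')" .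
  qed
qed

lemma clamped_new_field_continuous:
  assumes near: "\<And>s. s \<ge> 0 \<Longrightarrow> old_error (x s) \<le> old_radius"
    and cont: "\<And>j. j \<in> {2..n} \<Longrightarrow> continuous_on {0..T} (\<lambda>s. x s j)"
    and y: "continuous_on {0..T} y"
  shows "continuous_on {0..T} (\<lambda>s. clamped_new_field x s (y s))"
proof -
  obtain L1 where L1: "L1-lipschitz_on (cball zs1 (norm zs1 / 2)) (\<lambda>z. edge_term d kl z zs1)"
    using edge_term_lipschitz[OF zs1_nonzero kl_pos] by blast
  obtain L2 where L2: "L2-lipschitz_on (cball zs2 (norm zs2 / 2)) (\<lambda>z. edge_term d kl1 z zs2)"
    using edge_term_lipschitz[OF zs2_nonzero kl1_pos] by blast
  have clamp: "continuous_on {0..T} (\<lambda>s. box_clamp new_star new_radius (y s))"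
    using new_radius_pos by (intro continuous_on_compose2[OF continuous_on_box_clamp y]) auto
  have "continuous_on {0..T} (\<lambda>s. edge_term d kl (- box_clamp new_star new_radius (y s)) zs1)"
    using clamped_edge_arguments(1)[of x, OF near]
    by (intro continuous_on_compose2[OF lipschitz_on_continuous_on[OF L1]] continuous_intros clamp) auto
  moreover have "continuous_on {0..T} (\<lambda>s. edge_term d kl1 (x s 2 - box_clamp new_star new_radius (y s)) zs2)"
    using clamped_edge_arguments(2)[of x, OF near] cont[of 2] n2
    by (intro continuous_on_compose2[OF lipschitz_on_continuous_on[OF L2]] continuous_intros clamp) auto
  moreover have "continuous_on {0..T} (\<lambda>s. leader_input (x s))"
    using near cont unfolding old_radius_def by (intro leader_input_continuous) auto
  ultimately show ?thesis unfolding clamped_new_field_eq by (intro continuous_intros)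
qed


lemma clamped_trajectory_exists:
  assumes near: "\<And>s. s \<ge> 0 \<Longrightarrow> old_error (x s) \<le> old_radius"
    and cont: "\<And>j T. j \<in> {2..n} \<Longrightarrow> continuous_on {0..T} (\<lambda>s. x s j)"
  shows "\<exists>w. w 0 = w0 \<and> (\<forall>T. \<forall>t\<in>{0..T}.
           (w has_vector_derivative clamped_new_field x t (w t)) (at t within {0..T}))"
proof -
  have "\<exists>M. \<forall>s\<ge>0. \<forall>y. norm (clamped_new_field x s y) \<le> M"
    by (rule clamped_new_field_bounded[OF near])
  then obtain M where bound: "\<forall>s\<ge>0. \<forall>y. norm (clamped_new_field x s y) \<le> M"
    by (elim exE)
  have "\<exists>L>0. \<forall>s\<ge>0. \<forall>y y'.
      norm (clamped_new_field x s y - clamped_new_field x s y') \<le> L * norm (y - y')"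
    by (rule clamped_new_field_lipschitz[OF near])
  then obtain L where L: "L > 0" and lip: "\<forall>s\<ge>0. \<forall>y y'.
      norm (clamped_new_field x s y - clamped_new_field x s y') \<le> L * norm (y - y')"
    by (elim exE conjE)
  have bound': "\<And>s y. s \<ge> 0 \<Longrightarrow> norm (clamped_new_field x s y) \<le> M" using bound by blast
  have lip': "\<And>s y y'. s \<ge> 0 \<Longrightarrow>
      norm (clamped_new_field x s y - clamped_new_field x s y') \<le> L * norm (y - y')"
    using lip by blast
  show ?thesis
    using L bound' lip' clamped_new_field_continuous[OF near cont] by (rule global_solution_exists)
qed

lemma merged_solutions_exist: "solutions_exist m E' isd' k' ps' init_radius"
  unfolding solutions_exist_def
proof (intro allI impI)
  fix x0 assume x0: "merged_error x0 < init_radius"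
  have "old_error x0 < \<delta>0" using old_error_le_merged[of x0] x0 unfolding init_radius_def by linarith
  then obtain x where init: "\<forall>j\<in>{2..n}. x 0 j = x0 j" and sol: "\<And>T. T \<ge> 0 \<Longrightarrow> is_solution n E isd k ps x T"
    using old_exist unfolding solutions_exist_def by blast
  have near: "old_error (x s) \<le> old_radius" if "s \<ge> 0" for s
    using old_error_along_solution(2)[OF x0 that sol[OF that] init] that by simp
  have cont: "continuous_on {0..T} (\<lambda>s. x s j)" if "j \<in> {2..n}" for j T
    using solution_component_continuous[OF sol that] by (cases "T \<ge> 0") auto
  have "\<exists>w. w 0 = x0 m \<and> (\<forall>T. \<forall>t\<in>{0..T}.
      (w has_vector_derivative clamped_new_field x t (w t)) (at t within {0..T}))"
    by (rule clamped_trajectory_exists[OF near cont])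
  then obtain w where w0: "w 0 = x0 m" and der_all: "\<forall>T. \<forall>t\<in>{0..T}.
      (w has_vector_derivative clamped_new_field x t (w t)) (at t within {0..T})"
    by (elim exE conjE)
  have der: "\<And>T t. t \<in> {0..T} \<Longrightarrow> (w has_vector_derivative clamped_new_field x t (w t)) (at t within {0..T})"
    using der_all by blast
  define X where "X s = (x s)(m := w s)" for s
  have "is_solution m E' isd' k' ps' X T" if T: "T \<ge> 0" for T
    unfolding is_solution_merged_iff
  proof (intro conjI ballI)
    have "is_solution n E isd k ps X T = is_solution n E isd k ps x T"
      unfolding X_def by (rule is_solution_cong) simp
    then show "is_solution n E isd k ps X T" using sol[OF T] by simp
    fix t assume t: "t \<in> {0..T}"
    have unclamped: "clamped_new_field x s (w s) = new_field ((x s)(m := w s))"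
      if "s \<in> {0..T}" "norm (w s - new_star) \<le> new_radius" for s
      unfolding clamped_new_field_def using box_clamp_eq_self[OF that(2)] by simp
    have "(norm (w t - new_star))\<^sup>2 \<le> overshoot * (merged_error x0)\<^sup>2 * exp (- new_rate * t)"
      by (rule new_error_decay[OF x0 T sol[OF T] init der w0 unclamped t])
    also have "\<dots> \<le> overshoot * (merged_error x0)\<^sup>2"
      using overshoot_ge_1 new_rate_pos t by (intro mult_left_le) auto
    also have "\<dots> < new_radius\<^sup>2" by (rule overshoot_small[OF x0])
    finally have "norm (w t - new_star) \<le> new_radius"
      using new_radius_pos by (simp add: power2_less_imp_less less_imp_le)
    then show "((\<lambda>s. X s m) has_vector_derivative new_field (X t)) (at t within {0..T})"
      using der[OF t] unclamped[OF t] unfolding X_def by simp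
  qed
  moreover have "\<forall>j\<in>{2..m}. X 0 j = x0 j" unfolding X_def using init w0 by auto
  ultimately show "\<exists>x. (\<forall>j\<in>{2..m}. x 0 j = x0 j) \<and> (\<forall>T\<ge>0. is_solution m E' isd' k' ps' x T)"
    by blast
qed

lemma merged_loc_exp_stable: "loc_exp_stable m E' isd' k' ps'"
proof -
  have "c0 + sqrt overshoot > 0" "min r0 (new_rate / 2) > 0"
    using c0_pos overshoot_ge_1 r0_pos new_rate_pos by (auto intro: add_pos_nonneg)
  then show ?thesis
    unfolding loc_exp_stable_iff using init_radius_pos merged_solutions_exist merged_solutions_decay by blast
qed

end

context formation_merge
begin

lemma merged_loc_exp_stable_if_stable:
  assumes "loc_exp_stable n E isd k ps"
  shows "loc_exp_stable m E' isd' k' ps'"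
proof -
  obtain c K where "c > 0" "K \<ge> 0" and descent: "\<And>e. norm e \<le> min (norm zs1) (norm zs2) / 2 \<Longrightarrow>
      e \<bullet> new_edges_field e \<le> - c * (norm e)\<^sup>2 + K * norm e ^ 3"
    using two_edge_descent[OF det2_new_edges kl_pos kl1_pos, of d] unfolding new_edges_field_def by blast
  obtain P where "P \<ge> 0" and "\<And>\<zeta>. old_error \<zeta> \<le> min leader_radius (norm zs2 / 4) \<Longrightarrow>
      norm (\<zeta> m - new_star) \<le> norm zs2 / 4 \<Longrightarrow>
      norm (new_field \<zeta> - new_edges_field (\<zeta> m - new_star)) \<le> P * old_error \<zeta>"
    using new_field_perturbation by blast
  moreover obtain \<delta>0 c0 r0 where "\<delta>0 > 0" "c0 > 0" "r0 > 0"
    "solutions_exist n E isd k ps \<delta>0" "solutions_decay n E isd k ps \<delta>0 c0 r0"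
    using assms unfolding loc_exp_stable_iff by blast
  ultimately interpret merge_estimates n E isd k ps d kl kl1 q c K P \<delta>0 c0 r0
    using \<open>c > 0\<close> \<open>K \<ge> 0\<close> descent
    by (intro merge_estimates.intro formation_merge_axioms merge_estimates_axioms.intro) auto
  show ?thesis by (rule merged_loc_exp_stable)
qed

end

theorem proposition3:
  fixes n :: nat and E :: "(nat \<times> nat) set" and isd :: "nat \<Rightarrow> bool"
    and k :: "nat \<times> nat \<Rightarrow> real" and ps :: "nat \<Rightarrow> pt"
    and d :: bool and kl kl1 :: real and q :: pt
  assumes n2: "n \<ge> 2"
    and E_sub: "E \<subseteq> {(i, j). i \<in> {1..n} \<and> j \<in> {1..n} \<and> i \<noteq> j}"
    and k_pos: "\<forall>e\<in>E. k e > 0"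
    and ps_distinct: "inj_on ps {1..n}"
    and stable: "loc_exp_stable n E isd k ps"
    and kl_pos: "kl > 0" and kl1_pos: "kl1 > 0"
    and q_new: "q \<notin> ps ` {1..n}"
    and noncol: "\<not> collinear {ps 1, ps 2, q}"
  shows "loc_exp_stable (Suc n) (E \<union> {(Suc n, 1), (Suc n, 2)}) (isd(Suc n := d))
           (k((Suc n, 1) := kl, (Suc n, 2) := kl1)) (ps(Suc n := q))"
  by (rule formation_merge.merged_loc_exp_stable_if_stable
      [OF formation_merge.intro[OF n2 E_sub k_pos ps_distinct kl_pos kl1_pos noncol] stable])

end
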